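(* Assume $a$ is (WD) or (SD) and let $\beta,\gamma\ge0$. For $z\in H^2_{\frac1a,0}(0,1)$ define $|||z|||^2:=\int_0^1(z'')^2dx+\beta z^2(1)+\gamma(z'(1))^2$. Then $|||\cdot|||$ and $\|\cdot\|_{2,\sim}$ (where $\|z\|_{2,\sim}=\|z''\|_{L^2(0,1)}$) are equivalent norms on $H^2_{\frac1a,0}(0,1)$. Moreover, for every $\lambda,\mu\in\mathbb{R}$ the variational problem $$\int_0^1 z''\varphi''dx+\beta z(1)\varphi(1)+\gamma z'(1)\varphi'(1)=\lambda\varphi(1)+\mu\varphi'(1)\qquad\forall\varphi\in H^2_{\frac1a,0}(0,1)$$ admits a unique solution $z\in H^2_{\frac1a,0}(0,1)$, which satisfies $$\int_0^1\frac{z^2}{a}dx\le (4C_{HP}+1)(|\lambda|+|\mu|)^2,\qquad |||z|||^2\le(|\lambda|+|\mu|)^2.$$ In addition $z\in D(A)$ and $Az=0$, $\beta z(1)-z'''(1)=\lambda$, $\gamma z'(1)+z''(1)=\mu$.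
   Context: $a$ is weakly degenerate (WD) if $a\in C[0,1]\cap C^1(0,1]$, $a(0)=0$, $a>0$ on $(0,1]$ and $K:=\sup_{x\in(0,1]}\frac{x|a'(x)|}{a(x)}\in(0,1)$; $a$ is strongly degenerate (SD) if $a\in C^1[0,1]$, $a(0)=0$, $a>0$ on $(0,1]$ and $K\in[1,2)$. $L^2_{\frac1a}(0,1):=\{u\in L^2(0,1):\int_0^1 u^2/a\,dx<\infty\}$; $H^1_{\frac1a,0}(0,1):=\{u\in L^2_{\frac1a}(0,1)\cap H^1(0,1):u(0)=0\}$; $H^2_{\frac1a,0}(0,1):=\{u\in H^1_{\frac1a,0}(0,1)\cap H^2(0,1):u'(0)=0\}$. $D(A):=\{u\in H^2_{\frac1a,0}(0,1): au''''\in L^2_{\frac1a}(0,1)\}$ and $Au:=au''''$. $C_{HP}>0$ is the best constant in the inequality $\int_0^1 u^2/a\,dx\le C\int_0^1(u')^2dx$ for $u\in H^1_{\frac1a,0}(0,1)$ (finite under (WD) or (SD)). *)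

theory Defs
  imports "HOL-Analysis.Analysis"
begin

text \<open>Sobolev functions are
identified with their continuous representatives on [0,1], and weak
derivatives are carried along explicitly.\<close>

definition Ksup :: "(real \<Rightarrow> real) \<Rightarrow> (real \<Rightarrow> real) \<Rightarrow> real set" where
  "Ksup a a' = (\<lambda>x. x * \<bar>a' x\<bar> / a x) ` {0<..1}"

definition WD :: "(real \<Rightarrow> real) \<Rightarrow> bool" where
  "WD a \<longleftrightarrow> continuous_on {0..1} a \<and> a 0 = 0 \<and> (\<forall>x\<in>{0<..1}. a x > 0) \<and>
     (\<exists>a'. (\<forall>x\<in>{0<..1}. (a has_real_derivative a' x) (at x within {0..1}))
          \<and> continuous_on {0<..1} a'
          \<and> bdd_above (Ksup a a') \<and> 0 < Sup (Ksup a a') \<and> Sup (Ksup a a') < 1)"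

definition SD :: "(real \<Rightarrow> real) \<Rightarrow> bool" where
  "SD a \<longleftrightarrow> a 0 = 0 \<and> (\<forall>x\<in>{0<..1}. a x > 0) \<and>
     (\<exists>a'. (\<forall>x\<in>{0..1}. (a has_real_derivative a' x) (at x within {0..1}))
          \<and> continuous_on {0..1} a'
          \<and> bdd_above (Ksup a a') \<and> 1 \<le> Sup (Ksup a a') \<and> Sup (Ksup a a') < 2)"

definition test_fun :: "(real \<Rightarrow> real) \<Rightarrow> bool" where
  "test_fun \<phi> \<longleftrightarrow> (\<forall>n x. ((deriv ^^ n) \<phi>) differentiable (at x)) \<and>
     compact (closure {x. \<phi> x \<noteq> 0}) \<and> closure {x. \<phi> x \<noteq> 0} \<subseteq> {0<..<1}"

definition loc_int :: "(real \<Rightarrow> real) \<Rightarrow> bool" where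
  "loc_int f \<longleftrightarrow> (\<forall>K. compact K \<and> K \<subseteq> {0<..<1} \<longrightarrow> set_integrable lborel K f)"

definition weak_deriv :: "(real \<Rightarrow> real) \<Rightarrow> (real \<Rightarrow> real) \<Rightarrow> bool" where
  "weak_deriv u v \<longleftrightarrow> loc_int u \<and> loc_int v \<and>
     (\<forall>\<phi>. test_fun \<phi> \<longrightarrow>
        (LINT x:{0<..<1}|lborel. u x * deriv \<phi> x) = - (LINT x:{0<..<1}|lborel. v x * \<phi> x))"

definition L2 :: "(real \<Rightarrow> real) \<Rightarrow> bool" where
  "L2 u \<longleftrightarrow> set_borel_measurable lborel {0<..<1} u \<and>
     set_integrable lborel {0<..<1} (\<lambda>x. (u x)\<^sup>2)"

definition L2a :: "(real \<Rightarrow> real) \<Rightarrow> (real \<Rightarrow> real) \<Rightarrow> bool" where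
  "L2a a u \<longleftrightarrow> L2 u \<and> set_integrable lborel {0<..<1} (\<lambda>x. (u x)\<^sup>2 / a x)"

definition H1 :: "(real \<Rightarrow> real) \<Rightarrow> (real \<Rightarrow> real) \<Rightarrow> bool" where
  "H1 u u' \<longleftrightarrow> L2 u \<and> L2 u' \<and> weak_deriv u u' \<and> continuous_on {0..1} u"

definition H1a0 :: "(real \<Rightarrow> real) \<Rightarrow> (real \<Rightarrow> real) \<Rightarrow> (real \<Rightarrow> real) \<Rightarrow> bool" where
  "H1a0 a u u' \<longleftrightarrow> H1 u u' \<and> L2a a u \<and> u 0 = 0"

definition H2a0 :: "(real \<Rightarrow> real) \<Rightarrow> (real \<Rightarrow> real) \<Rightarrow> (real \<Rightarrow> real) \<Rightarrow> (real \<Rightarrow> real) \<Rightarrow> bool" where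
  "H2a0 a u u1 u2 \<longleftrightarrow> H1a0 a u u1 \<and> H1 u1 u2 \<and> u1 0 = 0"

text \<open>\<open>u \<in> D(A)\<close>, where \<open>w\<close> is the distributional fourth derivative of \<open>u\<close>
  (so \<open>Au = a w\<close>).\<close>
definition DA :: "(real \<Rightarrow> real) \<Rightarrow> (real \<Rightarrow> real) \<Rightarrow> (real \<Rightarrow> real) \<Rightarrow> (real \<Rightarrow> real)
    \<Rightarrow> (real \<Rightarrow> real) \<Rightarrow> bool" where
  "DA a u u1 u2 w \<longleftrightarrow> H2a0 a u u1 u2 \<and> loc_int w \<and>
     (\<forall>\<phi>. test_fun \<phi> \<longrightarrow>
        (LINT x:{0<..<1}|lborel. u x * (deriv ^^ 4) \<phi> x) = (LINT x:{0<..<1}|lborel. w x * \<phi> x))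
     \<and> L2a a (\<lambda>x. a x * w x)"

definition C_HP :: "(real \<Rightarrow> real) \<Rightarrow> real" where
  "C_HP a = Inf {C. \<forall>u u'. H1a0 a u u' \<longrightarrow>
      (LINT x:{0<..<1}|lborel. (u x)\<^sup>2 / a x) \<le> C * (LINT x:{0<..<1}|lborel. (u' x)\<^sup>2)}"

definition norm2t :: "(real \<Rightarrow> real) \<Rightarrow> real" where
  "norm2t u2 = sqrt (LINT x:{0<..<1}|lborel. (u2 x)\<^sup>2)"

definition tnorm :: "real \<Rightarrow> real \<Rightarrow> (real \<Rightarrow> real) \<Rightarrow> (real \<Rightarrow> real) \<Rightarrow> (real \<Rightarrow> real) \<Rightarrow> real" where
  "tnorm \<beta> \<gamma> u u1 u2 =
     sqrt ((LINT x:{0<..<1}|lborel. (u2 x)\<^sup>2) + \<beta> * (u 1)\<^sup>2 + \<gamma> * (u1 1)\<^sup>2)"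

definition var_sol :: "(real \<Rightarrow> real) \<Rightarrow> real \<Rightarrow> real \<Rightarrow> real \<Rightarrow> real \<Rightarrow>
    (real \<Rightarrow> real) \<Rightarrow> (real \<Rightarrow> real) \<Rightarrow> (real \<Rightarrow> real) \<Rightarrow> bool" where
  "var_sol a \<beta> \<gamma> lam mu z z1 z2 \<longleftrightarrow> H2a0 a z z1 z2 \<and>
     (\<forall>\<phi> \<phi>1 \<phi>2. H2a0 a \<phi> \<phi>1 \<phi>2 \<longrightarrow>
        (LINT x:{0<..<1}|lborel. z2 x * \<phi>2 x) + \<beta> * z 1 * \<phi> 1 + \<gamma> * z1 1 * \<phi>1 1
          = lam * \<phi> 1 + mu * \<phi>1 1)"

end

theory Submission
  imports Defs "HOL-Computational_Algebra.Polynomial"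
begin

(* Every z in H^2_{1/a,0} vanishes together with z' at 0, so by Cauchy-Schwarz z(1)^2, z'(1)^2
   and the integral of z'^2 are bounded by the integral of z''^2.  This gives the equivalence of
   the norms, and coercivity of the bilinear form, hence uniqueness.  The solution is the cubic
   z = A x^2 + B x^3, the coefficients being fixed by the natural boundary conditions
   beta z(1) - z'''(1) = lambda and gamma z'(1) + z''(1) = mu, a linear system with determinant
   12 + 12 gamma + 4 beta + beta gamma > 0.  Testing the equation with z itself gives
   |||z|||^2 = lambda z(1) + mu z'(1) <= (|lambda| + |mu|) |||z|||, and the Hardy-Poincare
   inequality bounds the weighted norm.  (WD) and (SD) are only used through K < 2, which
   gives a x >= a 1 * x^K and hence the Hardy inequality.
   Since Sobolev functions are given through weak derivatives against C_c^infinity test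
   functions, everything rests on the fundamental theorem of calculus for them, obtained by
   testing with smooth plateau functions built from exp (-1/x). *)

section \<open>Smooth plateau functions\<close>

definition flat_poly :: "real poly \<Rightarrow> real \<Rightarrow> real" where
  "flat_poly p x = (if x > 0 then poly p (1/x) * exp (-1/x) else 0)"

definition flat_deriv_poly :: "real poly \<Rightarrow> real poly" where
  "flat_deriv_poly p = monom 1 2 * (p - pderiv p)"

lemma poly_over_exp_tendsto_0:
  fixes p :: "real poly"
  shows "((\<lambda>t. poly p t / exp t) \<longlongrightarrow> 0) at_top"
proof -
  have "((\<lambda>t. \<Sum>i\<le>degree p. coeff p i * (t ^ i / exp t)) \<longlongrightarrow> (\<Sum>i\<le>degree p. coeff p i * 0)) at_top"
    using tendsto_power_div_exp_0 by (intro tendsto_sum tendsto_mult tendsto_const) auto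
  then show ?thesis by (simp add: poly_altdef sum_divide_distrib)
qed

lemma flat_poly_over_ident_tendsto_0:
  fixes p :: "real poly"
  shows "((\<lambda>y. poly p (1/y) * exp (-1/y) / y) \<longlongrightarrow> 0) (at_right 0)"
proof -
  have "((\<lambda>y. (\<lambda>t. poly (monom 1 1 * p) t / exp t) (inverse y)) \<longlongrightarrow> 0) (at_right 0)"
    by (rule filterlim_compose[OF poly_over_exp_tendsto_0 filterlim_inverse_at_top_right])
  moreover have "\<forall>\<^sub>F y in at_right 0.
      (\<lambda>t. poly (monom 1 1 * p) t / exp t) (inverse y) = poly p (1/y) * exp (-1/y) / y"
    by (auto simp: eventually_at_right_less poly_monom exp_minus field_simps)
  ultimately show ?thesis by (rule Lim_transform_eventually)
qed

lemma flat_poly_has_derivative: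
  "(flat_poly p has_real_derivative flat_poly (flat_deriv_poly p) x) (at x)"
proof (cases x "0 :: real" rule: linorder_cases)
  case greater
  have "((\<lambda>x. poly p (1/x) * exp (-1/x)) has_real_derivative
     poly (pderiv p) (1/x) * (- 1 / x^2) * exp (-1/x) + poly p (1/x) * (exp (-1/x) * (1/x^2))) (at x)"
    using greater
    by (auto intro!: derivative_eq_intros DERIV_chain2[OF poly_DERIV] simp: power2_eq_square field_simps)
  then have "((\<lambda>x. poly p (1/x) * exp (-1/x)) has_real_derivative flat_poly (flat_deriv_poly p) x) (at x)"
    using greater by (simp add: flat_poly_def flat_deriv_poly_def poly_monom field_simps power2_eq_square)
  then show ?thesis
    by (rule has_field_derivative_transform_within_open[where S="{0<..}"])
       (use greater in \<open>auto simp: flat_poly_def\<close>)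
next
  case less
  have "((\<lambda>x. 0) has_real_derivative flat_poly (flat_deriv_poly p) x) (at x)"
    using less by (simp add: flat_poly_def)
  then show ?thesis
    by (rule has_field_derivative_transform_within_open[where S="{..<0}"])
       (use less in \<open>auto simp: flat_poly_def\<close>)
next
  case equal
  have "((\<lambda>h. (flat_poly p (0 + h) - flat_poly p 0) / h) \<longlongrightarrow> 0) (at 0)"
    unfolding filterlim_at_split
  proof
    show "((\<lambda>h. (flat_poly p (0 + h) - flat_poly p 0) / h) \<longlongrightarrow> 0) (at_left 0)"
      by (rule tendsto_eventually)
         (auto simp: eventually_at_left_field flat_poly_def intro!: exI[of _ "-1"])
    show "((\<lambda>h. (flat_poly p (0 + h) - flat_poly p 0) / h) \<longlongrightarrow> 0) (at_right 0)"
      using flat_poly_over_ident_tendsto_0[of p]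
      by (rule Lim_transform_eventually)
         (rule eventually_mono[OF eventually_at_right_less], simp add: flat_poly_def)
  qed
  then show ?thesis using equal by (simp add: DERIV_def flat_poly_def)
qed

definition smooth :: "(real \<Rightarrow> real) \<Rightarrow> bool" where
  "smooth f \<longleftrightarrow> (\<forall>n x. ((deriv ^^ n) f) differentiable (at x))"

lemma smooth_coinduct:
  assumes "P f" and step: "\<And>g. P g \<Longrightarrow> (\<forall>x. g differentiable (at x)) \<and> P (deriv g)"
  shows "smooth f"
proof -
  have "\<forall>g. P g \<longrightarrow> P ((deriv ^^ n) g)" for n
  proof (induction n)
    case (Suc n)
    show ?case
    proof (intro allI impI)
      fix g assume "P g"
      then have "P ((deriv ^^ n) (deriv g))" using step Suc by blast
      then show "P ((deriv ^^ Suc n) g)" by (simp add: funpow_Suc_right del: funpow.simps)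
    qed
  qed simp
  then show ?thesis using assms unfolding smooth_def by blast
qed

lemma smooth_has_derivative:
  "smooth f \<Longrightarrow> (((deriv ^^ n) f) has_real_derivative (deriv ^^ Suc n) f x) (at x)"
  unfolding smooth_def using DERIV_deriv_iff_real_differentiable by simp

lemma smooth_continuous_on: "smooth f \<Longrightarrow> continuous_on S ((deriv ^^ n) f)"
  by (meson DERIV_continuous continuous_at_imp_continuous_on smooth_has_derivative)

lemma smooth_deriv: "smooth f \<Longrightarrow> smooth (deriv f)"
  unfolding smooth_def by (metis comp_apply funpow_Suc_right)

lemma smooth_times_ident:
  assumes "smooth f"
  shows "smooth (\<lambda>x. x * f x)"
proof (rule smooth_coinduct[where P="\<lambda>g. g = (\<lambda>x. x * f x) \<or>
     (\<exists>n c. g = (\<lambda>x. x * (deriv ^^ Suc n) f x + c * (deriv ^^ n) f x))"])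
  fix g
  assume "g = (\<lambda>x. x * f x) \<or> (\<exists>n c. g = (\<lambda>x. x * (deriv ^^ Suc n) f x + c * (deriv ^^ n) f x))"
  then show "(\<forall>x. g differentiable (at x)) \<and> (deriv g = (\<lambda>x. x * f x) \<or>
     (\<exists>n c. deriv g = (\<lambda>x. x * (deriv ^^ Suc n) f x + c * (deriv ^^ n) f x)))"
  proof
    assume g: "g = (\<lambda>x. x * f x)"
    have D: "(g has_real_derivative x * (deriv ^^ Suc 0) f x + 1 * (deriv ^^ 0) f x) (at x)" for x
      unfolding g
      by (rule DERIV_cong[OF DERIV_mult[OF DERIV_ident smooth_has_derivative[OF assms, of 0, simplified]]])
         simp
    then have "deriv g = (\<lambda>x. x * (deriv ^^ Suc 0) f x + 1 * (deriv ^^ 0) f x)"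
      by (intro ext DERIV_imp_deriv)
    then show ?thesis using D real_differentiable_def by blast
  next
    assume "\<exists>n c. g = (\<lambda>x. x * (deriv ^^ Suc n) f x + c * (deriv ^^ n) f x)"
    then obtain n c where g: "g = (\<lambda>x. x * (deriv ^^ Suc n) f x + c * (deriv ^^ n) f x)" by blast
    have D: "(g has_real_derivative
        x * (deriv ^^ Suc (Suc n)) f x + (c + 1) * (deriv ^^ Suc n) f x) (at x)" for x
      unfolding g
      by (rule DERIV_cong[OF DERIV_add[OF DERIV_mult[OF DERIV_ident smooth_has_derivative[OF assms]]
            DERIV_cmult[OF smooth_has_derivative[OF assms]]]]) (simp add: algebra_simps)
    then have "deriv g = (\<lambda>x. x * (deriv ^^ Suc (Suc n)) f x + (c + 1) * (deriv ^^ Suc n) f x)"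
      by (intro ext DERIV_imp_deriv)
    then show ?thesis using D real_differentiable_def by blast
  qed
qed simp

inductive smooth_gen :: "(real \<Rightarrow> real) \<Rightarrow> bool" where
  flat: "smooth_gen (flat_poly p)"
| const: "smooth_gen (\<lambda>x. c)"
| add: "smooth_gen f \<Longrightarrow> smooth_gen g \<Longrightarrow> smooth_gen (\<lambda>x. f x + g x)"
| mult: "smooth_gen f \<Longrightarrow> smooth_gen g \<Longrightarrow> smooth_gen (\<lambda>x. f x * g x)"
| inverse: "smooth_gen f \<Longrightarrow> (\<forall>x. f x \<noteq> 0) \<Longrightarrow> smooth_gen (\<lambda>x. inverse (f x))"
| affine: "smooth_gen f \<Longrightarrow> smooth_gen (\<lambda>x. f (c * x + d))"

lemma smooth_gen_has_derivative:
  "smooth_gen f \<Longrightarrow> \<exists>f'. smooth_gen f' \<and> (\<forall>x. (f has_real_derivative f' x) (at x))"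
proof (induction rule: smooth_gen.induct)
  case (flat p)
  then show ?case using flat_poly_has_derivative smooth_gen.flat by blast
next
  case (const c)
  have "smooth_gen (\<lambda>x. 0)" by (rule smooth_gen.const)
  then show ?case using DERIV_const by blast
next
  case (add f g)
  then obtain f' g' where D: "smooth_gen f'" "smooth_gen g'"
    "\<And>x. (f has_real_derivative f' x) (at x)" "\<And>x. (g has_real_derivative g' x) (at x)"
    by blast
  have "smooth_gen (\<lambda>x. f' x + g' x)" by (rule smooth_gen.add[OF D(1,2)])
  then show ?case using DERIV_add[OF D(3,4)] by blast
next
  case (mult f g)
  then obtain f' g' where D: "smooth_gen f'" "smooth_gen g'"
    "\<And>x. (f has_real_derivative f' x) (at x)" "\<And>x. (g has_real_derivative g' x) (at x)"
    by blast
  have "smooth_gen (\<lambda>x. f' x * g x + g' x * f x)"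
    by (rule smooth_gen.add[OF smooth_gen.mult[OF D(1) mult.hyps(2)] smooth_gen.mult[OF D(2) mult.hyps(1)]])
  moreover have "((\<lambda>x. f x * g x) has_real_derivative f' x * g x + g' x * f x) (at x)" for x
    by (rule DERIV_mult[OF D(3,4)])
  ultimately show ?case by blast
next
  case (inverse f)
  then obtain f' where D: "smooth_gen f'" "\<And>x. (f has_real_derivative f' x) (at x)" by blast
  have "smooth_gen (\<lambda>x. (-1) * (f' x * (inverse (f x) * inverse (f x))))"
    by (rule smooth_gen.mult[OF smooth_gen.const smooth_gen.mult[OF D(1)
        smooth_gen.mult[OF smooth_gen.inverse smooth_gen.inverse]]]) (use inverse in auto)
  moreover have "((\<lambda>x. inverse (f x)) has_real_derivative
      (-1) * (f' x * (inverse (f x) * inverse (f x)))) (at x)" for x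
    using DERIV_inverse_fun[OF D(2)[of x]] inverse.hyps(2) by (simp add: power2_eq_square)
  ultimately show ?case by blast
next
  case (affine f c d)
  then obtain f' where D: "smooth_gen f'" "\<And>x. (f has_real_derivative f' x) (at x)" by blast
  have "smooth_gen (\<lambda>x. f' (c * x + d) * c)"
    by (rule smooth_gen.mult[OF smooth_gen.affine[OF D(1)] smooth_gen.const])
  moreover have "((\<lambda>x. f (c * x + d)) has_real_derivative f' (c * x + d) * c) (at x)" for x
    by (rule DERIV_chain2[OF D(2)]) (auto intro!: derivative_eq_intros)
  ultimately show ?case by blast
qed

lemma smooth_gen_smooth: "smooth_gen f \<Longrightarrow> smooth f"
proof (rule smooth_coinduct[where P=smooth_gen])
  fix g assume "smooth_gen g"
  then obtain g' where g': "smooth_gen g'" "\<And>x. (g has_real_derivative g' x) (at x)"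
    using smooth_gen_has_derivative by blast
  have "deriv g = g'" using g'(2) by (intro ext DERIV_imp_deriv)
  then show "(\<forall>x. g differentiable (at x)) \<and> smooth_gen (deriv g)"
    using g' real_differentiable_def by blast
qed

lemma flat_poly_1_pos: "x > 0 \<Longrightarrow> flat_poly 1 x > 0"
  and flat_poly_1_eq_0: "x \<le> 0 \<Longrightarrow> flat_poly 1 x = 0"
  and flat_poly_1_nonneg: "flat_poly 1 x \<ge> 0"
  by (auto simp: flat_poly_def)

definition smooth_step :: "real \<Rightarrow> real" where
  "smooth_step x = flat_poly 1 x * inverse (flat_poly 1 x + flat_poly 1 ((-1) * x + 1))"
  \<comment> \<open>\<open>1 - x\<close> is written \<open>(-1) * x + 1\<close> to match \<open>smooth_gen.affine\<close>\<close>

lemma smooth_gen_smooth_step: "smooth_gen smooth_step"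
proof -
  have denom: "smooth_gen (\<lambda>x. flat_poly 1 x + flat_poly 1 ((-1) * x + 1))"
    by (rule smooth_gen.add[OF smooth_gen.flat smooth_gen.affine[OF smooth_gen.flat]])
  have "\<forall>x. flat_poly 1 x + flat_poly 1 ((-1) * x + 1) \<noteq> 0"
  proof
    fix x :: real
    show "flat_poly 1 x + flat_poly 1 ((-1) * x + 1) \<noteq> 0"
      using flat_poly_1_pos[of x] flat_poly_1_pos[of "(-1) * x + 1"] flat_poly_1_nonneg[of x]
        flat_poly_1_nonneg[of "(-1) * x + 1"]
      by (cases "x > 0") auto
  qed
  from smooth_gen.mult[OF smooth_gen.flat smooth_gen.inverse[OF denom this]]
  show ?thesis unfolding smooth_step_def[abs_def] .
qed

lemma smooth_step_eq_0: "x \<le> 0 \<Longrightarrow> smooth_step x = 0"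
  by (simp add: smooth_step_def flat_poly_1_eq_0)

lemma smooth_step_eq_1: "x \<ge> 1 \<Longrightarrow> smooth_step x = 1"
  using flat_poly_1_pos[of x] by (simp add: smooth_step_def flat_poly_1_eq_0)

lemma smooth_step_bounds: "0 \<le> smooth_step x" "smooth_step x \<le> 1"
proof -
  have "flat_poly 1 x \<ge> 0" "flat_poly 1 ((-1) * x + 1) \<ge> 0" by (rule flat_poly_1_nonneg)+
  then have "0 \<le> smooth_step x \<and> smooth_step x \<le> 1"
    unfolding smooth_step_def
    by (cases "flat_poly 1 x + flat_poly 1 ((-1) * x + 1) = 0") (auto simp: field_simps)
  then show "0 \<le> smooth_step x" "smooth_step x \<le> 1" by auto
qed

lemma smooth_step_has_derivative: "(smooth_step has_real_derivative deriv smooth_step x) (at x)"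
  using smooth_has_derivative[OF smooth_gen_smooth[OF smooth_gen_smooth_step], of 0] by simp

lemma continuous_on_deriv_smooth_step: "continuous_on S (deriv smooth_step)"
  using smooth_continuous_on[OF smooth_gen_smooth[OF smooth_gen_smooth_step], of S 1] by simp

lemma deriv_smooth_step_outside:
  assumes "x < 0 \<or> x > 1"
  shows "deriv smooth_step x = 0"
proof -
  have "(smooth_step has_real_derivative 0) (at x)"
    using assms
  proof
    assume "x < 0"
    show ?thesis
      by (rule has_field_derivative_transform_within_open[where f="\<lambda>x. 0" and S="{..<0}"])
         (use \<open>x < 0\<close> in \<open>auto simp: smooth_step_eq_0\<close>)
  next
    assume "x > 1"
    show ?thesis
      by (rule has_field_derivative_transform_within_open[where f="\<lambda>x. 1" and S="{1<..}"])
         (use \<open>x > 1\<close> in \<open>auto simp: smooth_step_eq_1\<close>)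
  qed
  then show ?thesis by (rule DERIV_imp_deriv)
qed

lemma deriv_smooth_step_bounded:
  obtains B where "B \<ge> 0" "\<And>y. \<bar>deriv smooth_step y\<bar> \<le> B"
proof -
  obtain B where B: "\<And>y. y \<in> {0..1} \<Longrightarrow> norm (deriv smooth_step y) \<le> B"
    using compact_imp_bounded[OF compact_continuous_image[OF continuous_on_deriv_smooth_step compact_Icc]]
    unfolding bounded_iff by blast
  have "\<bar>deriv smooth_step y\<bar> \<le> B" for y
    using B[of y] deriv_smooth_step_outside[of y] B[of 0] by (cases "y < 0 \<or> y > 1") auto
  moreover have "B \<ge> 0" using B[of 0] by auto
  ultimately show ?thesis using that by blast
qed

lemma smooth_step_scaled_has_derivative:
  "d \<noteq> 0 \<Longrightarrow> ((\<lambda>x. smooth_step ((x - c) / d)) has_real_derivative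
     deriv smooth_step ((x - c) / d) / d) (at x)"
  by (rule DERIV_chain2[OF smooth_step_has_derivative, THEN DERIV_cong]) (auto intro!: derivative_eq_intros)

lemma continuous_on_deriv_smooth_step_scaled:
  "continuous_on S (\<lambda>x. deriv smooth_step ((x - c) / d) / d)"
proof -
  have "continuous_on S (\<lambda>x. deriv smooth_step ((x - c) / d))"
    by (rule continuous_on_compose2[OF continuous_on_deriv_smooth_step[of UNIV]])
       (auto simp only: divide_inverse intro!: continuous_intros)
  then show ?thesis by (simp only: divide_inverse) (intro continuous_intros)
qed

lemma deriv_smooth_step_scaled_has_integral:
  assumes "d > 0" "c \<ge> 0" "c + d \<le> 1"
  shows "((\<lambda>x. deriv smooth_step ((x - c) / d) / d) has_integral 1) {0..1}"
proof -
  have "((\<lambda>x. deriv smooth_step ((x - c) / d) / d) has_integral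
      (smooth_step ((1 - c) / d) - smooth_step ((0 - c) / d))) {0..1}"
    by (rule fundamental_theorem_of_calculus)
       (use assms in \<open>auto intro!: DERIV_subset[OF smooth_step_scaled_has_derivative]
          simp: has_real_derivative_iff_has_vector_derivative[symmetric]\<close>)
  moreover have "smooth_step ((1 - c) / d) = 1"
    using assms by (intro smooth_step_eq_1) (auto simp: le_divide_eq)
  moreover have "smooth_step ((0 - c) / d) = 0"
    using assms by (intro smooth_step_eq_0) (auto simp: divide_le_0_iff)
  ultimately show ?thesis by simp
qed

definition plateau :: "real \<Rightarrow> real \<Rightarrow> real \<Rightarrow> real \<Rightarrow> real" where
  "plateau s t d x = smooth_step ((x - s) / d) - smooth_step ((x - (t - d)) / d)"

lemma smooth_gen_plateau:
  assumes "d \<noteq> 0"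
  shows "smooth_gen (plateau s t d)"
proof -
  have "(1/d) * x + (- s / d) = (x - s) / d" "(1/d) * x + (- (t - d) / d) = (x - (t - d)) / d" for x
    using assms by (simp_all add: field_simps)
  moreover have "smooth_gen (\<lambda>x. smooth_step ((1/d) * x + (- s / d)) +
      (-1) * smooth_step ((1/d) * x + (- (t - d) / d)))"
    by (rule smooth_gen.add[OF smooth_gen.affine[OF smooth_gen_smooth_step]
        smooth_gen.mult[OF smooth_gen.const smooth_gen.affine[OF smooth_gen_smooth_step]]])
  ultimately show ?thesis by (simp add: plateau_def[abs_def])
qed

lemma deriv_plateau:
  "d \<noteq> 0 \<Longrightarrow> deriv (plateau s t d) =
     (\<lambda>x. deriv smooth_step ((x - s) / d) / d - deriv smooth_step ((x - (t - d)) / d) / d)"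
  unfolding plateau_def[abs_def]
  by (intro ext DERIV_imp_deriv DERIV_diff smooth_step_scaled_has_derivative)

lemma plateau_outside:
  assumes "0 < d" "d \<le> t - s" "x \<le> s \<or> x \<ge> t"
  shows "plateau s t d x = 0"
  using assms(3)
proof
  assume "x \<le> s"
  then have "(x - s) / d \<le> 0" "(x - (t - d)) / d \<le> 0" using assms by (auto simp: divide_le_0_iff)
  then show ?thesis by (simp add: plateau_def smooth_step_eq_0)
next
  assume "x \<ge> t"
  then have "(x - s) / d \<ge> 1" "(x - (t - d)) / d \<ge> 1" using assms by (auto simp: le_divide_eq)
  then show ?thesis by (simp add: plateau_def smooth_step_eq_1)
qed

lemma plateau_inside:
  assumes "0 < d" "2 * d \<le> t - s" "s \<le> x" "x \<le> t"
  shows "0 \<le> plateau s t d x" "plateau s t d x \<le> 1"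
    "s + d < x \<Longrightarrow> x < t - d \<Longrightarrow> plateau s t d x = 1"
proof -
  have "0 \<le> plateau s t d x \<and> plateau s t d x \<le> 1"
  proof (cases "x \<le> t - d")
    case True
    then have "(x - (t - d)) / d \<le> 0" using assms by (auto simp: divide_le_0_iff)
    then show ?thesis using smooth_step_bounds by (simp add: plateau_def smooth_step_eq_0)
  next
    case False
    then have "(x - s) / d \<ge> 1" using assms by (auto simp: le_divide_eq)
    then show ?thesis using smooth_step_bounds[of "(x - (t - d)) / d"]
      by (simp add: plateau_def smooth_step_eq_1)
  qed
  then show "0 \<le> plateau s t d x" "plateau s t d x \<le> 1" by auto
  assume "s + d < x" "x < t - d"
  then have "(x - s) / d \<ge> 1" "(x - (t - d)) / d \<le> 0"
    using assms by (auto simp: le_divide_eq divide_le_0_iff)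
  then show "plateau s t d x = 1" by (simp add: plateau_def smooth_step_eq_0 smooth_step_eq_1)
qed

lemma abs_plateau_le_1: "\<bar>plateau s t d x\<bar> \<le> 1"
  using smooth_step_bounds[of "(x - s) / d"] smooth_step_bounds[of "(x - (t - d)) / d"]
  by (auto simp: plateau_def)

section \<open>Test functions\<close>

lemma funpow_deriv_eq_0_outside_closure:
  fixes \<phi> :: "real \<Rightarrow> real"
  assumes "x \<notin> closure {x. \<phi> x \<noteq> 0}"
  shows "(deriv ^^ n) \<phi> x = 0"
proof -
  let ?U = "- closure {x. \<phi> x \<noteq> 0}"
  have "\<forall>y\<in>?U. (deriv ^^ n) \<phi> y = 0"
  proof (induction n)
    case 0
    then show ?case using closure_subset[of "{x. \<phi> x \<noteq> 0}"] by auto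
  next
    case (Suc n)
    have "((deriv ^^ n) \<phi> has_real_derivative 0) (at y)" if "y \<in> ?U" for y
      by (rule has_field_derivative_transform_within_open[where f="\<lambda>x. 0" and S="?U"])
         (use Suc that in auto)
    then show ?case by (simp add: DERIV_imp_deriv)
  qed
  then show ?thesis using assms by blast
qed

lemma test_fun_smooth: "test_fun \<phi> \<Longrightarrow> smooth \<phi>"
  unfolding test_fun_def smooth_def by blast

lemma test_funI:
  assumes "smooth \<phi>" "\<And>x. \<phi> x \<noteq> 0 \<Longrightarrow> a \<le> x \<and> x \<le> b" "0 < a" "b < 1"
  shows "test_fun \<phi>"
proof -
  have "closure {x. \<phi> x \<noteq> 0} \<subseteq> {a..b}"
    using assms(2) by (intro closure_minimal) auto
  moreover have "bounded {x. \<phi> x \<noteq> 0}"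
    using assms(2) by (intro bounded_subset[OF bounded_closed_interval[of a b]]) auto
  ultimately show ?thesis using assms unfolding test_fun_def smooth_def by auto
qed

lemma test_fun_subsupport:
  assumes "test_fun \<phi>" "smooth \<psi>" "{x. \<psi> x \<noteq> 0} \<subseteq> closure {x. \<phi> x \<noteq> 0}"
  shows "test_fun \<psi>"
proof -
  have sub: "closure {x. \<psi> x \<noteq> 0} \<subseteq> closure {x. \<phi> x \<noteq> 0}"
    using assms(3) by (intro closure_minimal) auto
  have "bounded {x. \<psi> x \<noteq> 0}"
    using assms(1,3) unfolding test_fun_def by (meson bounded_subset compact_imp_bounded)
  then show ?thesis using sub assms(1,2) unfolding test_fun_def smooth_def by auto
qed

lemma test_fun_deriv:
  assumes "test_fun \<phi>"
  shows "test_fun (deriv \<phi>)"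
  by (rule test_fun_subsupport[OF assms smooth_deriv[OF test_fun_smooth[OF assms]]])
     (use funpow_deriv_eq_0_outside_closure[of _ \<phi> 1] in auto)

lemma test_fun_funpow_deriv: "test_fun \<phi> \<Longrightarrow> test_fun ((deriv ^^ n) \<phi>)"
  by (induction n) (auto intro: test_fun_deriv)

lemma test_fun_times_ident:
  assumes "test_fun \<phi>"
  shows "test_fun (\<lambda>x. x * \<phi> x)"
  by (rule test_fun_subsupport[OF assms smooth_times_ident[OF test_fun_smooth[OF assms]]])
     (use closure_subset[of "{x. \<phi> x \<noteq> 0}"] in auto)

lemma test_fun_outside: "test_fun \<phi> \<Longrightarrow> x \<notin> {0<..<1} \<Longrightarrow> (deriv ^^ n) \<phi> x = 0"
  by (rule funpow_deriv_eq_0_outside_closure) (auto simp: test_fun_def)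

lemma test_fun_has_derivative:
  "test_fun \<phi> \<Longrightarrow> (((deriv ^^ n) \<phi>) has_real_derivative (deriv ^^ Suc n) \<phi> x) (at x)"
  by (rule smooth_has_derivative[OF test_fun_smooth])

lemma test_fun_continuous_on: "test_fun \<phi> \<Longrightarrow> continuous_on S ((deriv ^^ n) \<phi>)"
  by (rule smooth_continuous_on[OF test_fun_smooth])

lemma test_fun_plateau:
  assumes "0 < s" "t < 1" "0 < d" "d \<le> t - s"
  shows "test_fun (plateau s t d)"
proof (rule test_funI)
  show "smooth (plateau s t d)" using smooth_gen_plateau smooth_gen_smooth assms by auto
  show "s \<le> x \<and> x \<le> t" if "plateau s t d x \<noteq> 0" for x
    using plateau_outside[OF assms(3,4), of x] that by force
qed (use assms in auto)

lemma deriv_times_ident: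
  "test_fun \<phi> \<Longrightarrow> deriv (\<lambda>x. x * \<phi> x) = (\<lambda>x. \<phi> x + x * deriv \<phi> x)"
  by (intro ext DERIV_imp_deriv DERIV_cong[OF DERIV_mult[OF DERIV_ident
        test_fun_has_derivative[of \<phi> 0, simplified]]]) simp_all

section \<open>Weak derivatives and the fundamental theorem of calculus\<close>

lemma set_integral_nonneg_real:
  fixes f :: "'a \<Rightarrow> real"
  shows "(\<And>x. x \<in> A \<Longrightarrow> 0 \<le> f x) \<Longrightarrow> 0 \<le> (LINT x:A|M. f x)"
  unfolding set_lebesgue_integral_def
  by (auto intro!: Bochner_Integration.integral_nonneg simp: indicator_def)

lemma set_integral_Ioo_continuous:
  fixes f :: "real \<Rightarrow> real"
  assumes "continuous_on {0..1} f"
  shows "set_integrable lborel {0<..<1} f" "(LINT x:{0<..<1}|lborel. f x) = integral {0..1} f"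
proof -
  have "set_integrable lborel {0..1} f"
    using borel_integrable_compact[OF _ assms] unfolding set_integrable_def by simp
  then show si: "set_integrable lborel {0<..<1} f"
    by (rule set_integrable_subset) auto
  show "(LINT x:{0<..<1}|lborel. f x) = integral {0..1} f"
    using set_borel_integral_eq_integral(2)[OF si] by (simp add: integral_open_interval_real)
qed

lemma set_integral_Ioo_henstock:
  fixes f :: "real \<Rightarrow> real"
  assumes "set_integrable lborel {0<..<1} f"
  shows "(LINT x:{0<..<1}|lborel. f x) = integral {0..1} f" "f absolutely_integrable_on {0..1}"
proof -
  show "(LINT x:{0<..<1}|lborel. f x) = integral {0..1} f"
    using set_borel_integral_eq_integral(2)[OF assms] by (simp add: integral_open_interval_real)
  have "f absolutely_integrable_on {0<..<1}"
    using set_borel_integral_eq_integral(1)[OF assms]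
      set_borel_integral_eq_integral(1)[OF set_integrable_norm[OF assms]]
    by (simp add: absolutely_integrable_on_def)
  then show "f absolutely_integrable_on {0..1}" using absolutely_integrable_on_Icc_iff_Ioo by blast
qed

lemma set_integrable_Ioo_mult_continuous:
  fixes f g :: "real \<Rightarrow> real"
  assumes "set_integrable lborel {0<..<1} f" "continuous_on {0..1} g"
  shows "set_integrable lborel {0<..<1} (\<lambda>x. f x * g x)"
proof -
  obtain B where "\<forall>y\<in>g ` {0..1}. norm y \<le> B"
    using compact_imp_bounded[OF compact_continuous_image[OF assms(2) compact_Icc]]
    unfolding bounded_iff by blast
  then have B: "\<And>x. x \<in> {0..1} \<Longrightarrow> \<bar>g x\<bar> \<le> B" by auto
  have mf: "(\<lambda>x. indicator {0<..<1} x *\<^sub>R f x) \<in> borel_measurable borel"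
    using assms(1) by (simp add: set_integrable_def)
  have "continuous_on {0<..<1} g" using assms(2) by (rule continuous_on_subset) auto
  then have mg: "(\<lambda>x. indicator {0<..<1} x *\<^sub>R g x) \<in> borel_measurable borel"
    by (intro borel_measurable_continuous_on_indicator) auto
  have eq: "(\<lambda>x. indicator {0<..<1} x *\<^sub>R (f x * g x)) =
     (\<lambda>x. (indicator {0<..<1} x *\<^sub>R f x) * (indicator {0<..<1} x *\<^sub>R g x))"
    by (auto simp: indicator_def)
  have "set_integrable lborel {0<..<1} (\<lambda>x. B * f x)" using assms(1) by simp
  then show ?thesis
  proof (rule set_integrable_bound)
    show "set_borel_measurable lborel {0<..<1} (\<lambda>x. f x * g x)"
      unfolding set_borel_measurable_def eq using mf mg by simp
    have "norm (f x * g x) \<le> norm (B * f x)" if "x \<in> {0<..<1}" for x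
    proof -
      have "\<bar>f x\<bar> * \<bar>g x\<bar> \<le> \<bar>f x\<bar> * \<bar>B\<bar>"
        using B[of x] that by (intro mult_left_mono) auto
      then show ?thesis by (simp add: abs_mult mult.commute)
    qed
    then show "AE x in lborel. x \<in> {0<..<1} \<longrightarrow> norm (f x * g x) \<le> norm (B * f x)" by simp
  qed
qed

lemma continuous_on_Icc_uniform_delta:
  fixes f :: "real \<Rightarrow> real"
  assumes "continuous_on {0..1} f" "e > 0"
  obtains d where "d > 0"
    "\<And>x y. x \<in> {0..1} \<Longrightarrow> y \<in> {0..1} \<Longrightarrow> \<bar>y - x\<bar> \<le> d \<Longrightarrow> \<bar>f y - f x\<bar> \<le> e"
proof -
  obtain d where d: "d > 0" "\<forall>x\<in>{0..1}. \<forall>y\<in>{0..1}. dist y x < d \<longrightarrow> dist (f y) (f x) < e"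
    using compact_uniformly_continuous[OF assms(1) compact_Icc] assms(2)
    unfolding uniformly_continuous_on_def by blast
  show ?thesis
  proof (rule that[of "d/2"])
    fix x y :: real assume "x \<in> {0..1}" "y \<in> {0..1}" "\<bar>y - x\<bar> \<le> d / 2"
    then show "\<bar>f y - f x\<bar> \<le> e" using d(1) d(2)[rule_format, of x y] by (simp add: dist_real_def)
  qed (use d in simp)
qed

lemma integral_mollifier_approx:
  fixes v :: "real \<Rightarrow> real"
  assumes v: "continuous_on {0..1} v" and d: "d > 0" and c: "0 \<le> c" "c + d \<le> 1"
    and B: "\<And>y. \<bar>deriv smooth_step y\<bar> \<le> B"
    and e: "\<And>y. y \<in> {0..1} \<Longrightarrow> \<bar>y - p\<bar> \<le> d \<Longrightarrow> \<bar>v y - v p\<bar> \<le> e"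
    and p: "c \<le> p" "p \<le> c + d"
  shows "\<bar>integral {0..1} (\<lambda>x. v x * (deriv smooth_step ((x - c) / d) / d)) - v p\<bar> \<le> e * B"
proof -
  define r where "r x = deriv smooth_step ((x - c) / d) / d" for x
  have rc: "continuous_on {0..1} r"
    unfolding r_def by (rule continuous_on_deriv_smooth_step_scaled)
  have r1: "(r has_integral 1) {0..1}"
    unfolding r_def by (rule deriv_smooth_step_scaled_has_integral) (use d c in auto)
  have vr: "(\<lambda>x. v x * r x) integrable_on {0..1}"
    by (intro integrable_continuous_interval continuous_intros v rc)
  have eq: "integral {0..1} (\<lambda>x. (v x - v p) * r x) = integral {0..1} (\<lambda>x. v x * r x) - v p"
    using has_integral_diff[OF integrable_integral[OF vr] has_integral_mult_right[OF r1, of "v p"]]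
    by (simp add: integral_unique algebra_simps)
  define g where "g x = (if x \<in> {c..c+d} then e * B / d else 0)" for x
  have g: "(g has_integral e * B) {0..1}"
  proof -
    have "{c..c+d} \<inter> {0..1} = {c..c+d}" using c d by auto
    then have "integral {0..1} g = e * B" "g integrable_on {0..1}"
      using d unfolding g_def integral_restrict_Int integrable_restrict_Int by auto
    then show ?thesis by (metis has_integral_integrable_integral)
  qed
  have bound: "norm ((v x - v p) * r x) \<le> g x" if x: "x \<in> {0..1}" for x
  proof (cases "x \<in> {c..c+d}")
    case True
    then have "\<bar>v x - v p\<bar> \<le> e" using e x p by auto
    moreover have "\<bar>r x\<bar> \<le> B / d" unfolding r_def using B d by (simp add: divide_right_mono)
    ultimately have "\<bar>v x - v p\<bar> * \<bar>r x\<bar> \<le> e * (B / d)" by (intro mult_mono) auto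
    then show ?thesis using True by (simp add: g_def abs_mult)
  next
    case False
    then have "(x - c) / d < 0 \<or> (x - c) / d > 1"
      using d by (auto simp: divide_less_0_iff less_divide_eq)
    then show ?thesis using False by (auto simp: r_def g_def deriv_smooth_step_outside)
  qed
  have "norm (integral {0..1} (\<lambda>x. (v x - v p) * r x)) \<le> integral {0..1} g"
    by (rule integral_norm_bound_integral[OF _ has_integral_integrable[OF g] bound])
       (intro integrable_continuous_interval continuous_intros v rc)
  then have "\<bar>integral {0..1} (\<lambda>x. v x * r x) - v p\<bar> \<le> e * B"
    using eq integral_unique[OF g] by (metis real_norm_def)
  then show ?thesis unfolding r_def .
qed

lemma plateau_error_le:
  fixes w :: real
  assumes d: "0 < d" "2 * d \<le> t - s"
  shows "norm (w * plateau s t d x - (if x \<in> {s..t} then w else 0)) \<le>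
    (if x \<in> {s..s+d} then \<bar>w\<bar> else 0) + (if x \<in> {t-d..t} then \<bar>w\<bar> else 0)"
proof (cases "s \<le> x \<and> x \<le> t")
  case False
  then show ?thesis using plateau_outside[of d t s x] d by auto
next
  case True
  then have "norm (w * plateau s t d x - (if x \<in> {s..t} then w else 0)) = \<bar>w\<bar> * \<bar>plateau s t d x - 1\<bar>"
    by (simp add: abs_mult[symmetric] algebra_simps)
  moreover have "\<bar>w\<bar> * \<bar>plateau s t d x - 1\<bar> \<le> \<bar>w\<bar>"
    using plateau_inside(1,2)[OF d True[THEN conjunct1] True[THEN conjunct2]] by (intro mult_left_le) auto
  moreover have "plateau s t d x = 1" if "s + d < x" "x < t - d"
    using plateau_inside(3)[OF d] True that by auto
  ultimately show ?thesis using True by (auto simp: not_less)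
qed

lemma integral_plateau_approx:
  fixes w :: "real \<Rightarrow> real"
  assumes w: "w absolutely_integrable_on {0..1}"
    and st: "0 < s" "t < 1" and d: "0 < d" "2 * d \<le> t - s"
  shows "\<bar>integral {0..1} (\<lambda>x. w x * plateau s t d x) - integral {s..t} w\<bar>
           \<le> integral {s..s+d} (\<lambda>x. \<bar>w x\<bar>) + integral {t-d..t} (\<lambda>x. \<bar>w x\<bar>)"
proof -
  have wi: "w integrable_on {0..1}" and awi: "(\<lambda>x. \<bar>w x\<bar>) integrable_on {0..1}"
    using w unfolding absolutely_integrable_on_def by auto
  have test: "test_fun (plateau s t d)" by (rule test_fun_plateau) (use st d in auto)
  have "continuous_on {0..1} (plateau s t d)" using test_fun_continuous_on[OF test, of _ 0] by simp
  then have "(\<lambda>x. plateau s t d x * w x) absolutely_integrable_on {0..1}"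
    by (intro absolutely_integrable_bounded_measurable_product_real
        continuous_imp_measurable_on_sets_lebesgue w)
       (auto simp: bounded_iff intro!: exI[of _ 1] abs_plateau_le_1)
  then have we: "(\<lambda>x. w x * plateau s t d x) integrable_on {0..1}"
    by (simp add: absolutely_integrable_on_def mult.commute)
  have sti: "{s..t} \<inter> {0..1} = {s..t}" "{s..s+d} \<inter> {0..1} = {s..s+d}" "{t-d..t} \<inter> {0..1} = {t-d..t}"
    using st d by auto
  have ws: "(\<lambda>x. if x \<in> {s..t} then w x else 0) integrable_on {0..1}"
    unfolding integrable_restrict_Int sti by (rule integrable_subinterval_real[OF wi]) (use st in auto)
  have g1: "(\<lambda>x. if x \<in> {s..s+d} then \<bar>w x\<bar> else 0) integrable_on {0..1}"
    unfolding integrable_restrict_Int sti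
    by (rule integrable_subinterval_real[OF awi]) (use st d in auto)
  have g2: "(\<lambda>x. if x \<in> {t-d..t} then \<bar>w x\<bar> else 0) integrable_on {0..1}"
    unfolding integrable_restrict_Int sti
    by (rule integrable_subinterval_real[OF awi]) (use st d in auto)
  define g where
    "g x = (if x \<in> {s..s+d} then \<bar>w x\<bar> else 0) + (if x \<in> {t-d..t} then \<bar>w x\<bar> else 0)" for x
  have bound: "norm (w x * plateau s t d x - (if x \<in> {s..t} then w x else 0)) \<le> g x" for x
    unfolding g_def by (rule plateau_error_le[OF d])
  have "norm (integral {0..1} (\<lambda>x. w x * plateau s t d x - (if x \<in> {s..t} then w x else 0)))
      \<le> integral {0..1} g"
    by (rule integral_norm_bound_integral[OF integrable_diff[OF we ws] _ bound])
       (unfold g_def, rule integrable_add[OF g1 g2])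
  moreover have "integral {0..1} g = integral {s..s+d} (\<lambda>x. \<bar>w x\<bar>) + integral {t-d..t} (\<lambda>x. \<bar>w x\<bar>)"
    unfolding g_def integral_add[OF g1 g2] integral_restrict_Int sti ..
  ultimately show ?thesis
    using integral_diff[OF we ws] unfolding integral_restrict_Int sti by simp
qed

text \<open>Testing with \<open>plateau s t d\<close>, whose derivative is a difference of two mollifiers,
  and letting \<open>d \<rightarrow> 0\<close>.\<close>

lemma weak_deriv_FTC_interior_approx:
  fixes v w :: "real \<Rightarrow> real"
  assumes v: "continuous_on {0..1} v" and w: "w absolutely_integrable_on {0..1}"
    and wd: "\<And>\<phi>. test_fun \<phi> \<Longrightarrow>
      integral {0..1} (\<lambda>x. v x * deriv \<phi> x) = - integral {0..1} (\<lambda>x. w x * \<phi> x)"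
    and st: "0 < s" "s < t" "t < 1"
    and B: "\<And>y. \<bar>deriv smooth_step y\<bar> \<le> B" and e: "e > 0"
  shows "\<bar>v t - v s - integral {s..t} w\<bar> \<le> (2 * B + 2) * e"
proof -
  have awi: "(\<lambda>x. \<bar>w x\<bar>) integrable_on {0..1}"
    using w unfolding absolutely_integrable_on_def by auto
  define I where "I x = integral {0..x} (\<lambda>y. \<bar>w y\<bar>)" for x
  have Ic: "continuous_on {0..1} I" unfolding I_def by (rule indefinite_integral_continuous_1[OF awi])
  have Iint: "integral {a..b} (\<lambda>y. \<bar>w y\<bar>) = I b - I a" if "0 \<le> a" "a \<le> b" "b \<le> 1" for a b
    using Henstock_Kurzweil_Integration.integral_combine[where a=0 and c=a and b=b and f="\<lambda>y. \<bar>w y\<bar>"]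
      integrable_subinterval_real[OF awi, of 0 b] that
    unfolding I_def by auto
  obtain dv where dv: "dv > 0"
    "\<And>x y. x \<in> {0..1} \<Longrightarrow> y \<in> {0..1} \<Longrightarrow> \<bar>y - x\<bar> \<le> dv \<Longrightarrow> \<bar>v y - v x\<bar> \<le> e"
    using continuous_on_Icc_uniform_delta[OF v e] by blast
  obtain dI where dI: "dI > 0"
    "\<And>x y. x \<in> {0..1} \<Longrightarrow> y \<in> {0..1} \<Longrightarrow> \<bar>y - x\<bar> \<le> dI \<Longrightarrow> \<bar>I y - I x\<bar> \<le> e"
    using continuous_on_Icc_uniform_delta[OF Ic e] by blast
  define d where "d = min (min dv dI) ((t - s) / 2)"
  have d: "d > 0" "d \<le> dv" "d \<le> dI" "2 * d \<le> t - s"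
    using dv(1) dI(1) st unfolding d_def by (auto simp: min_def)
  define r1 where "r1 x = deriv smooth_step ((x - s) / d) / d" for x
  define r2 where "r2 x = deriv smooth_step ((x - (t - d)) / d) / d" for x
  have i1: "(\<lambda>x. v x * r1 x) integrable_on {0..1}" unfolding r1_def
    by (intro integrable_continuous_interval continuous_intros v continuous_on_deriv_smooth_step_scaled)
  have i2: "(\<lambda>x. v x * r2 x) integrable_on {0..1}" unfolding r2_def
    by (intro integrable_continuous_interval continuous_intros v continuous_on_deriv_smooth_step_scaled)
  have "d \<noteq> 0" using d by simp
  then have deq: "(\<lambda>x. v x * deriv (plateau s t d) x) = (\<lambda>x. v x * r1 x - v x * r2 x)"
    unfolding deriv_plateau[OF \<open>d \<noteq> 0\<close>] r1_def r2_def by (simp add: algebra_simps)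
  have weq: "integral {0..1} (\<lambda>x. v x * r1 x) - integral {0..1} (\<lambda>x. v x * r2 x)
      = - integral {0..1} (\<lambda>x. w x * plateau s t d x)"
    using wd[OF test_fun_plateau[of s t d]] st d unfolding deq integral_diff[OF i1 i2] by simp
  have E1: "\<bar>integral {0..1} (\<lambda>x. v x * r1 x) - v s\<bar> \<le> e * B"
    unfolding r1_def by (rule integral_mollifier_approx[OF v d(1) _ _ B]) (use st d dv(2)[of s] in auto)
  have E2: "\<bar>integral {0..1} (\<lambda>x. v x * r2 x) - v t\<bar> \<le> e * B"
    unfolding r2_def by (rule integral_mollifier_approx[OF v d(1) _ _ B]) (use st d dv(2)[of t] in auto)
  have "integral {s..s+d} (\<lambda>x. \<bar>w x\<bar>) \<le> e" "integral {t-d..t} (\<lambda>x. \<bar>w x\<bar>) \<le> e"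
    using Iint[of s "s + d"] Iint[of "t - d" t] dI(2)[of s "s + d"] dI(2)[of t "t - d"] d st by auto
  then have E3: "\<bar>integral {0..1} (\<lambda>x. w x * plateau s t d x) - integral {s..t} w\<bar> \<le> 2 * e"
    using integral_plateau_approx[OF w st(1,3) d(1,4)] by linarith
  show ?thesis using weq E1 E2 E3 by (simp add: abs_le_iff algebra_simps)
qed

lemma weak_deriv_FTC_interior:
  fixes v w :: "real \<Rightarrow> real"
  assumes v: "continuous_on {0..1} v" and w: "w absolutely_integrable_on {0..1}"
    and wd: "\<And>\<phi>. test_fun \<phi> \<Longrightarrow>
      integral {0..1} (\<lambda>x. v x * deriv \<phi> x) = - integral {0..1} (\<lambda>x. w x * \<phi> x)"
    and st: "0 < s" "s < t" "t < 1"
  shows "v t - v s = integral {s..t} w"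
proof (rule ccontr)
  obtain B where B0: "B \<ge> 0" and B: "\<And>y. \<bar>deriv smooth_step y\<bar> \<le> B"
    using deriv_smooth_step_bounded by blast
  define D where "D = \<bar>v t - v s - integral {s..t} w\<bar>"
  assume "v t - v s \<noteq> integral {s..t} w"
  then have D: "D > 0" unfolding D_def by auto
  have "D \<le> (2 * B + 2) * (D / (2 * (2 * B + 2)))"
    unfolding D_def
    by (rule weak_deriv_FTC_interior_approx[OF v w wd st B]) (use D B0 in \<open>auto simp: D_def\<close>)
  also have "\<dots> = D / 2" using B0 by (simp add: field_simps)
  finally show False using D by simp
qed

lemma weak_deriv_FTC:
  fixes v w :: "real \<Rightarrow> real"
  assumes v: "continuous_on {0..1} v" and w: "w absolutely_integrable_on {0..1}"
    and wd: "\<And>\<phi>. test_fun \<phi> \<Longrightarrow>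
      integral {0..1} (\<lambda>x. v x * deriv \<phi> x) = - integral {0..1} (\<lambda>x. w x * \<phi> x)"
    and x: "x \<in> {0..1}"
  shows "v x = v 0 + integral {0..x} w"
proof -
  have wi: "w integrable_on {0..1}" using w unfolding absolutely_integrable_on_def by auto
  define G where "G y = v y - integral {0..y} w" for y
  have cl: "closure {0<..<1::real} = {0..1}" by simp
  have Gc: "continuous_on (closure {0<..<1}) G"
    unfolding G_def cl by (rule continuous_on_diff[OF v indefinite_integral_continuous_1[OF wi]])
  have G_eq: "G t = G s" if "0 < s" "s < t" "t < 1" for s t
  proof -
    have "integral {0..s} w + integral {s..t} w = integral {0..t} w"
      by (rule Henstock_Kurzweil_Integration.integral_combine)
         (use that integrable_subinterval_real[OF wi, of 0 t] in auto)
    then show ?thesis using weak_deriv_FTC_interior[OF v w wd that] unfolding G_def by linarith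
  qed
  have G_const: "G y = G (1/2)" if "y \<in> {0<..<1}" for y
  proof -
    define m where "m = min y (1/2) / 2"
    have m: "0 < m" "m < y" "m < 1/2" using that unfolding m_def by auto
    have "G y = G m" by (rule G_eq) (use m that in auto)
    moreover have "G (1/2) = G m" by (rule G_eq) (use m in auto)
    ultimately show ?thesis by simp
  qed
  have "x \<in> closure {0<..<1}" "0 \<in> closure {0<..<1::real}" unfolding cl using x by auto
  then have "G x = G (1/2)" "G 0 = G (1/2)" by (auto intro: continuous_constant_on_closure[OF Gc G_const])
  then show ?thesis unfolding G_def by simp
qed

lemma weak_deriv_henstock:
  fixes v w :: "real \<Rightarrow> real"
  assumes v: "continuous_on {0..1} v" and w: "set_integrable lborel {0<..<1} w"
    and wd: "weak_deriv v w" and \<phi>: "test_fun \<phi>"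
  shows "integral {0..1} (\<lambda>x. v x * deriv \<phi> x) = - integral {0..1} (\<lambda>x. w x * \<phi> x)"
proof -
  have c0: "continuous_on {0..1} \<phi>" and c1: "continuous_on {0..1} (deriv \<phi>)"
    using test_fun_continuous_on[OF \<phi>, of _ 0] test_fun_continuous_on[OF \<phi>, of _ 1] by simp_all
  have "(LINT x:{0<..<1}|lborel. v x * deriv \<phi> x) = integral {0..1} (\<lambda>x. v x * deriv \<phi> x)"
    by (rule set_integral_Ioo_continuous(2)) (intro continuous_intros v c1)
  moreover have "(LINT x:{0<..<1}|lborel. w x * \<phi> x) = integral {0..1} (\<lambda>x. w x * \<phi> x)"
    by (rule set_integral_Ioo_henstock(1)[OF set_integrable_Ioo_mult_continuous[OF w c0]])
  ultimately show ?thesis using wd \<phi> unfolding weak_deriv_def by simp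
qed

section \<open>Sobolev functions on \<open>(0, 1)\<close>\<close>

lemma L2_set_integrable: "L2 u \<Longrightarrow> set_integrable lborel {0<..<1} u"
proof -
  assume u: "L2 u"
  have "set_integrable lborel {0<..<1::real} (\<lambda>x. 1::real)"
    unfolding set_integrable_def by (rule integrable_indicator) (simp_all add: greaterThanLessThan_borel)
  then have "set_integrable lborel {0<..<1} (\<lambda>x. 1 + (u x)\<^sup>2)"
    using u unfolding L2_def by (intro set_integral_add(1)) auto
  then show ?thesis
  proof (rule set_integrable_bound)
    show "set_borel_measurable lborel {0<..<1} u" using u unfolding L2_def by auto
    have "\<bar>y\<bar> \<le> 1 + y\<^sup>2" for y :: real
      using zero_le_power2[of "\<bar>y\<bar> - 1"] unfolding power2_diff by simp
    then show "AE x in lborel. x \<in> {0<..<1} \<longrightarrow> norm (u x) \<le> norm (1 + (u x)\<^sup>2)" by auto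
  qed
qed

lemma L2_henstock:
  assumes "L2 u"
  shows "u absolutely_integrable_on {0..1}" "(\<lambda>x. (u x)\<^sup>2) integrable_on {0..1}"
    "(LINT x:{0<..<1}|lborel. (u x)\<^sup>2) = integral {0..1} (\<lambda>x. (u x)\<^sup>2)"
proof -
  show "u absolutely_integrable_on {0..1}"
    by (rule set_integral_Ioo_henstock(2)[OF L2_set_integrable[OF assms]])
  have s: "set_integrable lborel {0<..<1} (\<lambda>x. (u x)\<^sup>2)" using assms unfolding L2_def by auto
  show "(\<lambda>x. (u x)\<^sup>2) integrable_on {0..1}"
    using set_integral_Ioo_henstock(2)[OF s] unfolding absolutely_integrable_on_def by auto
  show "(LINT x:{0<..<1}|lborel. (u x)\<^sup>2) = integral {0..1} (\<lambda>x. (u x)\<^sup>2)"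
    by (rule set_integral_Ioo_henstock(1)[OF s])
qed

lemma H1_FTC:
  assumes "H1 u u'" "x \<in> {0..1}"
  shows "u x = u 0 + integral {0..x} u'"
proof -
  have v: "continuous_on {0..1} u" and w: "set_integrable lborel {0<..<1} u'"
    and wd: "weak_deriv u u'"
    using assms L2_set_integrable unfolding H1_def by auto
  show ?thesis
  proof (rule weak_deriv_FTC[OF v set_integral_Ioo_henstock(2)[OF w] _ assms(2)])
    fix \<phi> :: "real \<Rightarrow> real" assume "test_fun \<phi>"
    then show "integral {0..1} (\<lambda>x. u x * deriv \<phi> x) = - integral {0..1} (\<lambda>x. u' x * \<phi> x)"
      by (rule weak_deriv_henstock[OF v w wd])
  qed
qed

text \<open>\<open>x \<phi>\<close> is a test function with \<open>(x \<phi>)' = \<phi> + x \<phi>'\<close>.\<close>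

lemma H1_weak_deriv_times_ident:
  assumes H: "H1 u u'" and \<phi>: "test_fun \<phi>"
  shows "integral {0..1} (\<lambda>x. x * u x * deriv \<phi> x) = - integral {0..1} (\<lambda>x. (u x + x * u' x) * \<phi> x)"
proof -
  have v: "continuous_on {0..1} u" and w: "set_integrable lborel {0<..<1} u'" and wd: "weak_deriv u u'"
    using H L2_set_integrable unfolding H1_def by auto
  have c0: "continuous_on {0..1} \<phi>" and c1: "continuous_on {0..1} (deriv \<phi>)"
    using test_fun_continuous_on[OF \<phi>, of _ 0] test_fun_continuous_on[OF \<phi>, of _ 1] by simp_all
  have i1: "(\<lambda>x. u x * \<phi> x) integrable_on {0..1}"
    by (intro integrable_continuous_interval continuous_intros v c0)
  have i2: "(\<lambda>x. x * u x * deriv \<phi> x) integrable_on {0..1}"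
    by (intro integrable_continuous_interval continuous_intros v c1)
  have "(\<lambda>x. (x * \<phi> x) * u' x) absolutely_integrable_on {0..1}"
    by (rule absolutely_integrable_bounded_measurable_product_real
        [OF continuous_imp_measurable_on_sets_lebesgue _ _ set_integral_Ioo_henstock(2)[OF w]])
       (auto intro!: continuous_intros c0 compact_imp_bounded compact_continuous_image)
  then have i3: "(\<lambda>x. u' x * (x * \<phi> x)) integrable_on {0..1}"
    unfolding absolutely_integrable_on_def by (simp add: mult.commute)
  have "integral {0..1} (\<lambda>x. u x * \<phi> x) + integral {0..1} (\<lambda>x. x * u x * deriv \<phi> x)
      = integral {0..1} (\<lambda>x. u x * deriv (\<lambda>x. x * \<phi> x) x)"
    unfolding deriv_times_ident[OF \<phi>] integral_add[OF i1 i2, symmetric] by (simp add: algebra_simps)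
  also have "\<dots> = - integral {0..1} (\<lambda>x. u' x * (x * \<phi> x))"
    by (rule weak_deriv_henstock[OF v w wd test_fun_times_ident[OF \<phi>]])
  finally have A: "integral {0..1} (\<lambda>x. u x * \<phi> x) + integral {0..1} (\<lambda>x. x * u x * deriv \<phi> x)
      = - integral {0..1} (\<lambda>x. u' x * (x * \<phi> x))" .
  have "integral {0..1} (\<lambda>x. (u x + x * u' x) * \<phi> x) =
      integral {0..1} (\<lambda>x. u x * \<phi> x + u' x * (x * \<phi> x))"
    by (simp add: algebra_simps)
  also have "\<dots> = integral {0..1} (\<lambda>x. u x * \<phi> x) + integral {0..1} (\<lambda>x. u' x * (x * \<phi> x))"
    by (rule integral_add[OF i1 i3])
  finally show ?thesis using A by simp
qed

lemma H1_integral_times_ident: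
  assumes H: "H1 u u'"
  shows "integral {0..1} (\<lambda>x. x * u' x) = u 1 - integral {0..1} u"
proof -
  have v: "continuous_on {0..1} u" and w: "set_integrable lborel {0<..<1} u'"
    using assms L2_set_integrable unfolding H1_def by auto
  have xw: "(\<lambda>x. x * u' x) absolutely_integrable_on {0..1}"
    by (rule absolutely_integrable_bounded_measurable_product_real
        [OF continuous_imp_measurable_on_sets_lebesgue _ _ set_integral_Ioo_henstock(2)[OF w]])
       (auto intro!: continuous_intros simp: bounded_iff intro!: exI[of _ 1])
  have w2: "(\<lambda>x. u x + x * u' x) absolutely_integrable_on {0..1}"
    by (rule set_integral_add(1)[OF absolutely_integrable_continuous_real[OF v] xw])
  have "(\<lambda>x. x * u x) 1 = (\<lambda>x. x * u x) 0 + integral {0..1} (\<lambda>x. u x + x * u' x)"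
    by (rule weak_deriv_FTC[OF _ w2]) (auto intro!: continuous_intros v H1_weak_deriv_times_ident[OF H])
  moreover have "integral {0..1} (\<lambda>x. u x + x * u' x) = integral {0..1} u + integral {0..1} (\<lambda>x. x * u' x)"
    by (rule integral_add) (use integrable_continuous_interval[OF v] xw absolutely_integrable_on_def in auto)
  ultimately show ?thesis by simp
qed

lemma integral_square_le:
  fixes f :: "real \<Rightarrow> real"
  assumes f: "f integrable_on {0..x}" and f2: "(\<lambda>y. (f y)\<^sup>2) integrable_on {0..x}" and x: "0 < x"
  shows "(integral {0..x} f)\<^sup>2 \<le> x * integral {0..x} (\<lambda>y. (f y)\<^sup>2)"
proof -
  define F1 where "F1 = integral {0..x} f"
  define F2 where "F2 = integral {0..x} (\<lambda>y. (f y)\<^sup>2)"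
  define m where "m = F1 / x"
  have "((\<lambda>y. (f y)\<^sup>2 - 2 * m * f y + m\<^sup>2) has_integral (F2 - 2 * m * F1 + m\<^sup>2 * x)) {0..x}"
    unfolding F1_def F2_def using has_integral_const_real[of "m\<^sup>2" 0 x] x
    by (intro has_integral_add has_integral_diff has_integral_mult_right integrable_integral f f2)
       (simp add: mult.commute)
  then have "0 \<le> F2 - 2 * m * F1 + m\<^sup>2 * x"
  proof (rule has_integral_nonneg)
    fix y
    show "0 \<le> (f y)\<^sup>2 - 2 * m * f y + m\<^sup>2"
      using zero_le_power2[of "f y - m"] unfolding power2_diff by (simp add: algebra_simps)
  qed
  also have "F2 - 2 * m * F1 + m\<^sup>2 * x = F2 - F1\<^sup>2 / x"
    unfolding m_def using x by (simp add: field_simps power2_eq_square)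
  finally show ?thesis using x unfolding F1_def F2_def by (simp add: divide_le_eq mult.commute)
qed

lemma H1_square_le:
  assumes H: "H1 u u'" and u0: "u 0 = 0" and x: "x \<in> {0..1}"
  shows "(u x)\<^sup>2 \<le> x * (LINT y:{0<..<1}|lborel. (u' y)\<^sup>2)"
proof (cases "x = 0")
  case False
  have L: "L2 u'" using H unfolding H1_def by auto
  have i1: "u' integrable_on {0..1}"
    using L2_henstock(1)[OF L] unfolding absolutely_integrable_on_def by auto
  have i2: "(\<lambda>y. (u' y)\<^sup>2) integrable_on {0..1}" by (rule L2_henstock(2)[OF L])
  have sub: "{0..x} \<subseteq> {0..1}" using x by auto
  have "(u x)\<^sup>2 \<le> x * integral {0..x} (\<lambda>y. (u' y)\<^sup>2)"
    using H1_FTC[OF H x] u0 False x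
    by (simp add: integral_square_le integrable_on_subinterval[OF i1 sub] integrable_on_subinterval[OF i2 sub])
  also have "\<dots> \<le> x * integral {0..1} (\<lambda>y. (u' y)\<^sup>2)"
    using x by (intro mult_left_mono integral_subset_le[OF sub integrable_on_subinterval[OF i2 sub] i2]) auto
  finally show ?thesis using L2_henstock(3)[OF L] by simp
qed (use u0 in simp)

lemma set_integral_square_nonneg:
  fixes u :: "real \<Rightarrow> real"
  shows "0 \<le> (LINT x:{0<..<1}|lborel. (u x)\<^sup>2)"
  by (intro set_integral_nonneg_real) simp

lemma H1_square_le_integral:
  assumes "H1 u u'" "u 0 = 0" "x \<in> {0..1}"
  shows "(u x)\<^sup>2 \<le> (LINT y:{0<..<1}|lborel. (u' y)\<^sup>2)"
  using assms(3) set_integral_square_nonneg[of u']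
  by (intro order_trans[OF H1_square_le[OF assms]] mult_left_le_one_le) auto

lemma H1_integral_square_le:
  assumes H: "H1 u u'" and u0: "u 0 = 0"
  shows "(LINT x:{0<..<1}|lborel. (u x)\<^sup>2) \<le> (LINT x:{0<..<1}|lborel. (u' x)\<^sup>2)"
proof -
  have c: "continuous_on {0..1} u" using H unfolding H1_def by auto
  have "integral {0..1} (\<lambda>x. (u x)\<^sup>2) \<le> integral {0..1} (\<lambda>x::real. LINT y:{0<..<1}|lborel. (u' y)\<^sup>2)"
    using H1_square_le_integral[OF H u0]
    by (intro integral_le integrable_continuous_interval continuous_intros c) auto
  moreover have "continuous_on {0..1} (\<lambda>x. (u x)\<^sup>2)" by (intro continuous_intros c)
  ultimately show ?thesis using set_integral_Ioo_continuous(2)[of "\<lambda>x. (u x)\<^sup>2"] by simp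
qed

lemma test_fun_integration_by_parts:
  fixes u u' :: "real \<Rightarrow> real"
  assumes d: "\<And>x. (u has_real_derivative u' x) (at x)" and c: "continuous_on UNIV u'"
    and \<phi>: "test_fun \<phi>"
  shows "(LINT x:{0<..<1}|lborel. u x * deriv \<phi> x) = - (LINT x:{0<..<1}|lborel. u' x * \<phi> x)"
proof -
  have uc: "continuous_on S u" for S
    by (rule continuous_at_imp_continuous_on) (use d DERIV_isCont in blast)
  have uc': "continuous_on S u'" for S using c by (rule continuous_on_subset) auto
  have c0: "continuous_on {0..1} \<phi>" and c1: "continuous_on {0..1} (deriv \<phi>)"
    using test_fun_continuous_on[OF \<phi>, of _ 0] test_fun_continuous_on[OF \<phi>, of _ 1] by simp_all
  have D\<phi>: "(\<phi> has_real_derivative deriv \<phi> x) (at x)" for x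
    using test_fun_has_derivative[OF \<phi>, of 0 x] by simp
  have "((\<lambda>x. u' x * \<phi> x + deriv \<phi> x * u x) has_integral (u 1 * \<phi> 1 - u 0 * \<phi> 0)) {0..1}"
    by (rule fundamental_theorem_of_calculus)
       (auto simp: has_real_derivative_iff_has_vector_derivative[symmetric]
         intro!: has_field_derivative_at_within[OF DERIV_mult[OF d D\<phi>]])
  moreover have "\<phi> 0 = 0" "\<phi> 1 = 0" using test_fun_outside[OF \<phi>, of _ 0] by auto
  ultimately have "integral {0..1} (\<lambda>x. u' x * \<phi> x) + integral {0..1} (\<lambda>x. u x * deriv \<phi> x) = 0"
    by (subst integral_add[symmetric])
       (auto simp: mult.commute integral_unique intro!: integrable_continuous_interval
         continuous_intros uc uc' c0 c1)
  moreover have "continuous_on {0..1} (\<lambda>x. u x * deriv \<phi> x)" "continuous_on {0..1} (\<lambda>x. u' x * \<phi> x)"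
    by (intro continuous_intros uc uc' c0 c1)+
  ultimately show ?thesis using set_integral_Ioo_continuous(2) by simp
qed

lemma continuous_on_L2:
  fixes u :: "real \<Rightarrow> real"
  assumes "continuous_on {0..1} u"
  shows "L2 u"
proof -
  have "continuous_on {0<..<1} u" using assms by (rule continuous_on_subset) auto
  then have "(\<lambda>x. indicator {0<..<1} x *\<^sub>R u x) \<in> borel_measurable borel"
    by (intro borel_measurable_continuous_on_indicator) auto
  moreover have "set_integrable lborel {0<..<1} (\<lambda>x. (u x)\<^sup>2)"
    by (rule set_integral_Ioo_continuous(1)) (intro continuous_intros assms)
  ultimately show ?thesis unfolding L2_def set_borel_measurable_def by simp
qed

lemma C1_weak_deriv:
  fixes u u' :: "real \<Rightarrow> real"
  assumes d: "\<And>x. (u has_real_derivative u' x) (at x)" and c: "continuous_on UNIV u'"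
  shows "weak_deriv u u'"
proof -
  have uc: "continuous_on S u" for S
    by (rule continuous_at_imp_continuous_on) (use d DERIV_isCont in blast)
  have loc: "loc_int f" if "\<And>S. continuous_on S f" for f :: "real \<Rightarrow> real"
    unfolding loc_int_def set_integrable_def
  proof (intro allI impI)
    fix K :: "real set" assume "compact K \<and> K \<subseteq> {0<..<1}"
    then show "integrable lborel (\<lambda>x. indicator K x *\<^sub>R f x)"
      by (intro borel_integrable_compact that) auto
  qed
  have uc': "continuous_on S u'" for S using c by (rule continuous_on_subset) auto
  show ?thesis
    unfolding weak_deriv_def using loc[OF uc] loc[OF uc'] test_fun_integration_by_parts[OF d c] by blast
qed

lemma C1_H1:
  fixes u u' :: "real \<Rightarrow> real"
  assumes d: "\<And>x. (u has_real_derivative u' x) (at x)" and c: "continuous_on UNIV u'"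
  shows "H1 u u'"
proof -
  have "continuous_on {0..1} u"
    by (rule continuous_at_imp_continuous_on) (use d DERIV_isCont in blast)
  moreover have "continuous_on {0..1} u'" using c by (rule continuous_on_subset) auto
  ultimately show ?thesis
    unfolding H1_def using continuous_on_L2 C1_weak_deriv[OF d c] by blast
qed

lemma L2_measurable: "L2 u \<Longrightarrow> (\<lambda>x. indicator {0<..<1} x *\<^sub>R u x) \<in> borel_measurable borel"
  unfolding L2_def set_borel_measurable_def by simp

lemma L2_diff:
  assumes u: "L2 u" and v: "L2 v"
  shows "L2 (\<lambda>x. u x - v x)"
proof -
  have e: "(\<lambda>x. indicator {0<..<1} x *\<^sub>R f (u x - v x)) =
      (\<lambda>x. f (indicator {0<..<1} x *\<^sub>R u x - indicator {0<..<1} x *\<^sub>R v x))" if "f 0 = 0" for f :: "real \<Rightarrow> real"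
    using that by (auto simp: indicator_def)
  have m: "(\<lambda>x. indicator {0<..<1} x *\<^sub>R (u x - v x)) \<in> borel_measurable borel"
    using e[of "\<lambda>y. y"] L2_measurable[OF u] L2_measurable[OF v] by simp
  have "set_integrable lborel {0<..<1} (\<lambda>x. 2 * (u x)\<^sup>2 + 2 * (v x)\<^sup>2)"
    using u v unfolding L2_def by (intro set_integral_add(1)) auto
  then have "set_integrable lborel {0<..<1} (\<lambda>x. (u x - v x)\<^sup>2)"
  proof (rule set_integrable_bound)
    show "set_borel_measurable lborel {0<..<1} (\<lambda>x. (u x - v x)\<^sup>2)"
      unfolding set_borel_measurable_def using e[of "\<lambda>y. y\<^sup>2"] L2_measurable[OF u] L2_measurable[OF v]
      by simp
    have "(u x - v x)\<^sup>2 \<le> 2 * (u x)\<^sup>2 + 2 * (v x)\<^sup>2" for x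
      using zero_le_power2[of "u x + v x"] by (simp add: power2_diff power2_sum)
    then show "AE x in lborel. x \<in> {0<..<1} \<longrightarrow> norm ((u x - v x)\<^sup>2) \<le> norm (2 * (u x)\<^sup>2 + 2 * (v x)\<^sup>2)"
      by auto
  qed
  then show ?thesis unfolding L2_def set_borel_measurable_def using m by simp
qed

lemma L2_mult:
  assumes u: "L2 u" and v: "L2 v"
  shows "set_integrable lborel {0<..<1} (\<lambda>x. u x * v x)"
proof -
  have e: "(\<lambda>x. indicator {0<..<1} x *\<^sub>R (u x * v x)) =
      (\<lambda>x. (indicator {0<..<1} x *\<^sub>R u x) * (indicator {0<..<1} x *\<^sub>R v x))"
    by (auto simp: indicator_def)
  have "set_integrable lborel {0<..<1} (\<lambda>x. (u x)\<^sup>2 + (v x)\<^sup>2)"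
    using u v unfolding L2_def by (intro set_integral_add(1)) auto
  then show ?thesis
  proof (rule set_integrable_bound)
    show "set_borel_measurable lborel {0<..<1} (\<lambda>x. u x * v x)"
      unfolding set_borel_measurable_def e using L2_measurable[OF u] L2_measurable[OF v] by simp
    have "\<bar>u x * v x\<bar> \<le> (u x)\<^sup>2 + (v x)\<^sup>2" for x
    proof -
      have "2 * (\<bar>u x\<bar> * \<bar>v x\<bar>) \<le> (u x)\<^sup>2 + (v x)\<^sup>2"
        using zero_le_power2[of "\<bar>u x\<bar> - \<bar>v x\<bar>"] unfolding power2_diff by simp
      moreover have "0 \<le> \<bar>u x\<bar> * \<bar>v x\<bar>" by simp
      ultimately show ?thesis unfolding abs_mult by linarith
    qed
    then show "AE x in lborel. x \<in> {0<..<1} \<longrightarrow> norm (u x * v x) \<le> norm ((u x)\<^sup>2 + (v x)\<^sup>2)"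
      by auto
  qed
qed

lemma H1_diff:
  assumes u: "H1 u u'" and v: "H1 v v'"
  shows "H1 (\<lambda>x. u x - v x) (\<lambda>x. u' x - v' x)"
proof -
  have uc: "continuous_on {0..1} u" and vc: "continuous_on {0..1} v"
    and Lu: "L2 u" "L2 u'" and Lv: "L2 v" "L2 v'"
    and wu: "weak_deriv u u'" and wv: "weak_deriv v v'"
    using u v unfolding H1_def by auto
  have "(LINT x:{0<..<1}|lborel. (u x - v x) * deriv \<phi> x) =
      - (LINT x:{0<..<1}|lborel. (u' x - v' x) * \<phi> x)" if \<phi>: "test_fun \<phi>" for \<phi>
  proof -
    have c0: "continuous_on {0..1} \<phi>" and c1: "continuous_on {0..1} (deriv \<phi>)"
      using test_fun_continuous_on[OF \<phi>, of _ 0] test_fun_continuous_on[OF \<phi>, of _ 1] by simp_all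
    have "set_integrable lborel {0<..<1} (\<lambda>x. u x * deriv \<phi> x)"
      "set_integrable lborel {0<..<1} (\<lambda>x. v x * deriv \<phi> x)"
      by (intro set_integral_Ioo_continuous(1) continuous_intros uc vc c1)+
    moreover have "set_integrable lborel {0<..<1} (\<lambda>x. u' x * \<phi> x)"
      "set_integrable lborel {0<..<1} (\<lambda>x. v' x * \<phi> x)"
      by (intro set_integrable_Ioo_mult_continuous L2_set_integrable Lu Lv c0)+
    ultimately show ?thesis
      using wu wv \<phi> unfolding weak_deriv_def left_diff_distrib by (simp add: set_integral_diff(2))
  qed
  moreover have "loc_int (\<lambda>x. u x - v x)" "loc_int (\<lambda>x. u' x - v' x)"
    using wu wv unfolding weak_deriv_def loc_int_def by (auto intro: set_integral_diff(1))
  ultimately show ?thesis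
    unfolding H1_def weak_deriv_def using L2_diff Lu Lv by (auto intro!: continuous_intros uc vc)
qed

section \<open>Hardy weights\<close>

locale hardy_weight =
  fixes a a' :: "real \<Rightarrow> real" and K :: real
  assumes pos: "\<And>x. x \<in> {0<..1} \<Longrightarrow> a x > 0"
    and has_deriv: "\<And>x. x \<in> {0<..1} \<Longrightarrow> (a has_real_derivative a' x) (at x within {0..1})"
    and log_deriv_le: "\<And>x. x \<in> {0<..1} \<Longrightarrow> x * \<bar>a' x\<bar> / a x \<le> K"
    and K_less_2: "K < 2"

lemma hardy_weight_if_WD_or_SD:
  assumes "WD a \<or> SD a"
  obtains a' K where "hardy_weight a a' K"
proof -
  have "\<exists>a'. Sup (Ksup a a') < 2 \<and> (\<forall>x\<in>{0<..1}. a x > 0) \<and>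
      (\<forall>x\<in>{0<..1}. (a has_real_derivative a' x) (at x within {0..1})) \<and> bdd_above (Ksup a a')"
    using assms
  proof
    assume "WD a"
    then obtain a' where "\<forall>x\<in>{0<..1}. a x > 0"
      "\<forall>x\<in>{0<..1}. (a has_real_derivative a' x) (at x within {0..1})"
      "bdd_above (Ksup a a')" "Sup (Ksup a a') < 1"
      unfolding WD_def by blast
    then show ?thesis by (intro exI[of _ a']) auto
  next
    assume "SD a"
    then obtain a' where "\<forall>x\<in>{0<..1}. a x > 0"
      "\<forall>x\<in>{0..1}. (a has_real_derivative a' x) (at x within {0..1})"
      "bdd_above (Ksup a a')" "Sup (Ksup a a') < 2"
      unfolding SD_def by blast
    then show ?thesis by (intro exI[of _ a']) auto
  qed
  then obtain a' where a': "Sup (Ksup a a') < 2" "\<forall>x\<in>{0<..1}. a x > 0"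
    "\<forall>x\<in>{0<..1}. (a has_real_derivative a' x) (at x within {0..1})" "bdd_above (Ksup a a')"
    by blast
  have "x * \<bar>a' x\<bar> / a x \<le> Sup (Ksup a a')" if "x \<in> {0<..1}" for x
    using that by (intro cSup_upper[OF _ a'(4)]) (auto simp: Ksup_def)
  then show ?thesis using a' by (intro that[of a' "Sup (Ksup a a')"]) (simp add: hardy_weight_def)
qed

context hardy_weight
begin

lemma has_real_derivative_at:
  assumes "x \<in> {0<..<1}"
  shows "(a has_real_derivative a' x) (at x)"
proof -
  have "at x within {0..1} = at x" by (rule at_within_interior) (use assms in auto)
  then show ?thesis using has_deriv[of x] assms by simp
qed

lemma continuous_on_Ioo: "continuous_on {0<..<1} a"
  by (rule continuous_at_imp_continuous_on) (use has_real_derivative_at DERIV_isCont in blast)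

text \<open>\<open>ln a x - K ln x\<close> is decreasing.\<close>

lemma lower_bound:
  assumes x: "x \<in> {0<..1}"
  shows "a 1 * x powr K \<le> a x"
proof -
  define h where "h y = ln (a y) - K * ln y" for y
  have "continuous_on {x..1} a"
    unfolding continuous_on_eq_continuous_within
  proof
    fix y assume "y \<in> {x..1}"
    then have "continuous (at y within {0..1}) a" using has_deriv[of y] x DERIV_continuous by auto
    then show "continuous (at y within {x..1}) a" by (rule continuous_within_subset) (use x in auto)
  qed
  moreover have "\<forall>y\<in>{x..1}. a y \<noteq> 0" "\<forall>y\<in>{x..1}. y \<noteq> 0"
    using pos x by (auto simp: less_imp_neq[symmetric])
  ultimately have hc: "continuous_on {x..1} h"
    unfolding h_def by (intro continuous_intros)
  have hd: "\<exists>D. (h has_real_derivative D) (at y) \<and> D \<le> 0" if y: "x < y" "y < 1" for y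
  proof -
    have y0: "y > 0" "y \<in> {0<..1}" "a y > 0" using x y pos by auto
    have "(h has_real_derivative inverse (a y) * a' y - K * inverse y) (at y)"
      unfolding h_def[abs_def] using y0 y
      by (intro DERIV_diff DERIV_chain2[OF DERIV_ln] DERIV_cmult[OF DERIV_ln] has_real_derivative_at) auto
    moreover have "inverse (a y) * a' y - K * inverse y \<le> 0"
    proof -
      have "\<bar>a' y\<bar> / a y \<le> K / y" using log_deriv_le[OF y0(2)] y0 by (simp add: field_simps)
      moreover have "a' y / a y \<le> \<bar>a' y\<bar> / a y" using y0 by (simp add: divide_right_mono)
      ultimately show ?thesis by (simp add: field_simps)
    qed
    ultimately show ?thesis by blast
  qed
  have "h 1 \<le> h x"
    by (rule DERIV_nonpos_imp_decreasing_open[OF _ hd hc]) (use x in auto)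
  then have "exp (ln (a 1) + K * ln x) \<le> exp (ln (a x))" unfolding h_def by simp
  then show ?thesis using pos[of x] pos[of 1] x by (simp add: exp_add powr_def)
qed

lemma lower_bound_square:
  assumes x: "x \<in> {0<..1}"
  shows "a 1 * x\<^sup>2 \<le> a x"
proof -
  have "x powr 2 \<le> x powr K" by (rule powr_mono') (use x K_less_2 in auto)
  then have "a 1 * x\<^sup>2 \<le> a 1 * x powr K" using pos[of 1] x by simp
  then show ?thesis using lower_bound[OF x] by linarith
qed

lemma hardy_inequality:
  assumes H: "H1a0 a u u'"
  shows "(LINT x:{0<..<1}|lborel. (u x)\<^sup>2 / a x) \<le>
    (1 / (a 1 * (2 - K))) * (LINT x:{0<..<1}|lborel. (u' x)\<^sup>2)"
proof -
  have H1: "H1 u u'" and u0: "u 0 = 0" and La: "L2a a u" using H unfolding H1a0_def by auto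
  define N where "N = (LINT x:{0<..<1}|lborel. (u' x)\<^sup>2)"
  have N0: "N \<ge> 0" unfolding N_def by (rule set_integral_square_nonneg)
  have a1: "a 1 > 0" using pos by auto
  have s: "set_integrable lborel {0<..<1} (\<lambda>x. (u x)\<^sup>2 / a x)" using La unfolding L2a_def by auto
  have i1: "(\<lambda>x. (u x)\<^sup>2 / a x) integrable_on {0..1}"
    using set_integral_Ioo_henstock(2)[OF s] unfolding absolutely_integrable_on_def by auto
  have pint: "((\<lambda>x. N / a 1 * x powr (1 - K)) has_integral (N / a 1 * (1 / (2 - K)))) {0..1}"
    using has_integral_powr_from_0[of "1 - K" 1] K_less_2 by (intro has_integral_mult_right) simp
  have bound: "(u x)\<^sup>2 / a x \<le> N / a 1 * x powr (1 - K)" if x: "x \<in> {0..1}" for x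
  proof (cases "x = 0")
    case False
    then have x0: "x > 0" "x \<in> {0<..1}" using x by auto
    have "(u x)\<^sup>2 / a x \<le> x * N / a x"
      using H1_square_le[OF H1 u0 x] pos[OF x0(2)] unfolding N_def by (simp add: divide_right_mono)
    also have "\<dots> \<le> x * N / (a 1 * x powr K)"
      using lower_bound[OF x0(2)] x0 N0 a1 pos[OF x0(2)] by (intro divide_left_mono) auto
    also have "\<dots> = N / a 1 * x powr (1 - K)"
      using x0 a1 by (simp add: powr_diff field_simps)
    finally show ?thesis .
  qed (use u0 in simp)
  have "integral {0..1} (\<lambda>x. (u x)\<^sup>2 / a x) \<le> N / a 1 * (1 / (2 - K))"
    using integral_le[OF i1 has_integral_integrable[OF pint] bound] integral_unique[OF pint] by simp
  then show ?thesis using set_integral_Ioo_henstock(1)[OF s] unfolding N_def by simp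
qed

lemma C_HP_set_nonempty:
  "{C. \<forall>u u'. H1a0 a u u' \<longrightarrow>
      (LINT x:{0<..<1}|lborel. (u x)\<^sup>2 / a x) \<le> C * (LINT x:{0<..<1}|lborel. (u' x)\<^sup>2)} \<noteq> {}"
  using hardy_inequality by blast

lemma C_HP_le:
  assumes H: "H1a0 a u u'"
  shows "(LINT x:{0<..<1}|lborel. (u x)\<^sup>2 / a x) \<le> C_HP a * (LINT x:{0<..<1}|lborel. (u' x)\<^sup>2)"
proof (cases "(LINT x:{0<..<1}|lborel. (u' x)\<^sup>2) = 0")
  case True
  obtain C where "\<forall>u u'. H1a0 a u u' \<longrightarrow>
      (LINT x:{0<..<1}|lborel. (u x)\<^sup>2 / a x) \<le> C * (LINT x:{0<..<1}|lborel. (u' x)\<^sup>2)"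
    using C_HP_set_nonempty by blast
  then have "(LINT x:{0<..<1}|lborel. (u x)\<^sup>2 / a x) \<le> C * (LINT x:{0<..<1}|lborel. (u' x)\<^sup>2)"
    using H by blast
  then show ?thesis using True by simp
next
  case False
  then have J: "(LINT x:{0<..<1}|lborel. (u' x)\<^sup>2) > 0"
    using set_integral_square_nonneg[of u'] by linarith
  have "(LINT x:{0<..<1}|lborel. (u x)\<^sup>2 / a x) / (LINT x:{0<..<1}|lborel. (u' x)\<^sup>2) \<le> C_HP a"
    unfolding C_HP_def using H J by (intro cInf_greatest[OF C_HP_set_nonempty]) (auto simp: divide_le_eq)
  then show ?thesis using J by (simp add: divide_le_eq)
qed

lemma L2a_if_linear_bound:
  fixes u :: "real \<Rightarrow> real"
  assumes uc: "continuous_on {0..1} u" and ub: "\<And>x. x \<in> {0<..<1} \<Longrightarrow> \<bar>u x\<bar> \<le> M * x"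
  shows "L2a a u"
proof -
  have a1: "a 1 > 0" using pos by auto
  have "continuous_on {0<..<1} u" using uc by (rule continuous_on_subset) auto
  then have mu: "(\<lambda>x. indicator {0<..<1} x *\<^sub>R u x) \<in> borel_measurable borel"
    by (intro borel_measurable_continuous_on_indicator) simp
  have ma: "(\<lambda>x. indicator {0<..<1} x *\<^sub>R a x) \<in> borel_measurable borel"
    by (intro borel_measurable_continuous_on_indicator continuous_on_Ioo) simp
  have e: "(\<lambda>x. indicator {0<..<1} x *\<^sub>R ((u x)\<^sup>2 / a x)) =
      (\<lambda>x. (indicator {0<..<1} x *\<^sub>R u x)\<^sup>2 / (indicator {0<..<1} x *\<^sub>R a x))"
    by (auto simp: indicator_def)
  have "set_integrable lborel {0<..<1::real} (\<lambda>x. M\<^sup>2 / a 1)"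
    unfolding set_integrable_def by (rule integrable_indicator) (simp_all add: greaterThanLessThan_borel)
  then have "set_integrable lborel {0<..<1} (\<lambda>x. (u x)\<^sup>2 / a x)"
  proof (rule set_integrable_bound)
    show "set_borel_measurable lborel {0<..<1} (\<lambda>x. (u x)\<^sup>2 / a x)"
      unfolding set_borel_measurable_def e using mu ma by simp
    have "norm ((u x)\<^sup>2 / a x) \<le> norm (M\<^sup>2 / a 1)" if x: "x \<in> {0<..<1}" for x
    proof -
      have x0: "x \<in> {0<..1}" "a x > 0" using x pos by auto
      have "(u x)\<^sup>2 \<le> M\<^sup>2 * x\<^sup>2"
        using power_mono[OF ub[OF x] abs_ge_zero, of 2] by (simp add: power_mult_distrib)
      then have "(u x)\<^sup>2 / a x \<le> M\<^sup>2 * x\<^sup>2 / (a 1 * x\<^sup>2)"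
        using lower_bound_square[OF x0(1)] x0 a1 by (intro frac_le) auto
      then show ?thesis using x0 a1 by simp
    qed
    then show "AE x in lborel. x \<in> {0<..<1} \<longrightarrow> norm ((u x)\<^sup>2 / a x) \<le> norm (M\<^sup>2 / a 1)" by auto
  qed
  then show ?thesis unfolding L2a_def using continuous_on_L2[OF uc] by simp
qed

lemma C_HP_nonneg: "0 \<le> C_HP a"
  unfolding C_HP_def
proof (rule cInf_greatest[OF C_HP_set_nonempty], safe)
  fix C
  assume C: "\<forall>u u'. H1a0 a u u' \<longrightarrow>
    (LINT x:{0<..<1}|lborel. (u x)\<^sup>2 / a x) \<le> C * (LINT x:{0<..<1}|lborel. (u' x)\<^sup>2)"
  have "H1a0 a (\<lambda>x. x) (\<lambda>x. 1)"
    unfolding H1a0_def by (auto intro!: C1_H1 L2a_if_linear_bound[of _ 1] continuous_intros DERIV_ident)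
  from C[rule_format, OF this]
  have "(LINT x:{0<..<1}|lborel. x\<^sup>2 / a x) \<le> C * (LINT x:{0<..<1::real}|lborel. 1)" by simp
  moreover have "(LINT x:{0<..<1::real}|lborel. (1::real)) = 1"
    using set_integral_Ioo_continuous(2)[of "\<lambda>_. 1"] by simp
  moreover have "0 \<le> (LINT x:{0<..<1}|lborel. x\<^sup>2 / a x)"
    using pos by (intro set_integral_nonneg_real) (simp add: less_imp_le)
  ultimately show "0 \<le> C" by simp
qed

lemma L2a_diff:
  assumes u: "L2a a u" and v: "L2a a v"
  shows "L2a a (\<lambda>x. u x - v x)"
proof -
  have Lu: "L2 u" and Lv: "L2 v" using u v unfolding L2a_def by auto
  have ma: "(\<lambda>x. indicator {0<..<1} x *\<^sub>R a x) \<in> borel_measurable borel"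
    by (intro borel_measurable_continuous_on_indicator continuous_on_Ioo) simp
  have e: "(\<lambda>x. indicator {0<..<1} x *\<^sub>R ((u x - v x)\<^sup>2 / a x)) =
      (\<lambda>x. (indicator {0<..<1} x *\<^sub>R u x - indicator {0<..<1} x *\<^sub>R v x)\<^sup>2 / (indicator {0<..<1} x *\<^sub>R a x))"
    by (auto simp: indicator_def)
  have "set_integrable lborel {0<..<1} (\<lambda>x. 2 * ((u x)\<^sup>2 / a x) + 2 * ((v x)\<^sup>2 / a x))"
    using u v unfolding L2a_def by (intro set_integral_add(1) set_integrable_mult_right) auto
  then have "set_integrable lborel {0<..<1} (\<lambda>x. (u x - v x)\<^sup>2 / a x)"
  proof (rule set_integrable_bound)
    show "set_borel_measurable lborel {0<..<1} (\<lambda>x. (u x - v x)\<^sup>2 / a x)"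
      unfolding set_borel_measurable_def e using L2_measurable[OF Lu] L2_measurable[OF Lv] ma by simp
    have "norm ((u x - v x)\<^sup>2 / a x) \<le> norm (2 * ((u x)\<^sup>2 / a x) + 2 * ((v x)\<^sup>2 / a x))"
      if x: "x \<in> {0<..<1}" for x
    proof -
      have ax: "a x > 0" using pos x by auto
      have "(u x - v x)\<^sup>2 \<le> 2 * (u x)\<^sup>2 + 2 * (v x)\<^sup>2"
        using zero_le_power2[of "u x + v x"] by (simp add: power2_diff power2_sum)
      then have "(u x - v x)\<^sup>2 / a x \<le> 2 * ((u x)\<^sup>2 / a x) + 2 * ((v x)\<^sup>2 / a x)"
        using ax by (simp add: divide_right_mono add_divide_distrib[symmetric])
      then show ?thesis using ax by simp
    qed
    then show "AE x in lborel. x \<in> {0<..<1} \<longrightarrow>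
        norm ((u x - v x)\<^sup>2 / a x) \<le> norm (2 * ((u x)\<^sup>2 / a x) + 2 * ((v x)\<^sup>2 / a x))"
      by auto
  qed
  then show ?thesis unfolding L2a_def using L2_diff[OF Lu Lv] by simp
qed

lemma H2a0_diff:
  assumes "H2a0 a z z1 z2" "H2a0 a y y1 y2"
  shows "H2a0 a (\<lambda>x. z x - y x) (\<lambda>x. z1 x - y1 x) (\<lambda>x. z2 x - y2 x)"
  using assms H1_diff L2a_diff unfolding H2a0_def H1a0_def by auto

end

section \<open>The variational problem\<close>

lemma H2a0_square_le:
  assumes H: "H2a0 a z z1 z2" and x: "x \<in> {0..1}"
  shows "(z x)\<^sup>2 \<le> (LINT y:{0<..<1}|lborel. (z2 y)\<^sup>2)"
    and "(z1 x)\<^sup>2 \<le> (LINT y:{0<..<1}|lborel. (z2 y)\<^sup>2)"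
proof -
  have H1: "H1 z z1" "H1 z1 z2" and z0: "z 0 = 0" "z1 0 = 0"
    using H unfolding H2a0_def H1a0_def by auto
  show "(z x)\<^sup>2 \<le> (LINT y:{0<..<1}|lborel. (z2 y)\<^sup>2)"
    using H1_square_le_integral[OF H1(1) z0(1) x] H1_integral_square_le[OF H1(2) z0(2)] by linarith
  show "(z1 x)\<^sup>2 \<le> (LINT y:{0<..<1}|lborel. (z2 y)\<^sup>2)"
    by (rule H1_square_le_integral[OF H1(2) z0(2) x])
qed

lemma H2a0_abs_le_norm2t:
  assumes "H2a0 a z z1 z2" "x \<in> {0..1}"
  shows "\<bar>z x\<bar> \<le> norm2t z2" "\<bar>z1 x\<bar> \<le> norm2t z2"
  using H2a0_square_le[OF assms] unfolding norm2t_def by (auto intro: real_le_rsqrt)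

lemma H2a0_eq_0_if_norm2t_eq_0:
  assumes "H2a0 a z z1 z2" "norm2t z2 = 0"
  shows "\<forall>x\<in>{0..1}. z x = 0"
  using H2a0_abs_le_norm2t(1)[OF assms(1)] assms(2) by fastforce

lemma norm2t_nonneg: "0 \<le> norm2t z2"
  using set_integral_square_nonneg[of z2] unfolding norm2t_def by simp

lemma tnorm_sq:
  assumes "\<beta> \<ge> 0" "\<gamma> \<ge> 0"
  shows "(tnorm \<beta> \<gamma> z z1 z2)\<^sup>2 =
    (LINT x:{0<..<1}|lborel. (z2 x)\<^sup>2) + \<beta> * (z 1)\<^sup>2 + \<gamma> * (z1 1)\<^sup>2"
  using assms set_integral_square_nonneg[of z2] unfolding tnorm_def by simp

lemma norm2t_le_tnorm:
  assumes "\<beta> \<ge> 0" "\<gamma> \<ge> 0"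
  shows "norm2t z2 \<le> tnorm \<beta> \<gamma> z z1 z2"
  using assms set_integral_square_nonneg[of z2] unfolding norm2t_def tnorm_def by simp

lemma tnorm_le_norm2t:
  assumes H: "H2a0 a z z1 z2" and "\<beta> \<ge> 0" "\<gamma> \<ge> 0"
  shows "tnorm \<beta> \<gamma> z z1 z2 \<le> sqrt (1 + \<beta> + \<gamma>) * norm2t z2"
proof -
  define N where "N = (LINT x:{0<..<1}|lborel. (z2 x)\<^sup>2)"
  have "\<beta> * (z 1)\<^sup>2 \<le> \<beta> * N" "\<gamma> * (z1 1)\<^sup>2 \<le> \<gamma> * N"
    using H2a0_square_le[OF H, of 1] assms(2,3) unfolding N_def by (auto intro: mult_left_mono)
  then have "N + \<beta> * (z 1)\<^sup>2 + \<gamma> * (z1 1)\<^sup>2 \<le> (1 + \<beta> + \<gamma>) * N" by (simp add: algebra_simps)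
  then show ?thesis unfolding tnorm_def norm2t_def N_def[symmetric] by (simp add: real_sqrt_mult[symmetric])
qed

lemma norms_equivalent:
  assumes "\<beta> \<ge> 0" "\<gamma> \<ge> 0"
  shows "\<exists>c C. 0 < c \<and> 0 < C \<and> (\<forall>z z1 z2. H2a0 a z z1 z2 \<longrightarrow>
            c * norm2t z2 \<le> tnorm \<beta> \<gamma> z z1 z2 \<and> tnorm \<beta> \<gamma> z z1 z2 \<le> C * norm2t z2)"
  using norm2t_le_tnorm[OF assms] tnorm_le_norm2t[OF _ assms] assms
  by (intro exI[of _ 1] exI[of _ "sqrt (1 + \<beta> + \<gamma>)"]) auto

text \<open>Testing the variational equation with \<open>z\<close> itself.\<close>

lemma var_sol_tnorm_bound:
  assumes sol: "var_sol a \<beta> \<gamma> lam mu z z1 z2" and \<beta>: "\<beta> \<ge> 0" and \<gamma>: "\<gamma> \<ge> 0"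
  shows "(tnorm \<beta> \<gamma> z z1 z2)\<^sup>2 \<le> (\<bar>lam\<bar> + \<bar>mu\<bar>)\<^sup>2"
proof -
  define T where "T = tnorm \<beta> \<gamma> z z1 z2"
  have H: "H2a0 a z z1 z2" using sol unfolding var_sol_def by blast
  have T0: "0 \<le> T"
    using norm2t_le_tnorm[OF \<beta> \<gamma>, of z2 z z1] norm2t_nonneg[of z2] unfolding T_def by linarith
  have "T * T = lam * z 1 + mu * z1 1"
    using sol[unfolded var_sol_def, THEN conjunct2, rule_format, OF H] tnorm_sq[OF \<beta> \<gamma>]
    unfolding T_def by (simp add: power2_eq_square)
  also have "\<dots> \<le> \<bar>lam\<bar> * \<bar>z 1\<bar> + \<bar>mu\<bar> * \<bar>z1 1\<bar>"
    by (intro add_mono) (simp_all add: abs_mult[symmetric])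
  also have "\<dots> \<le> (\<bar>lam\<bar> + \<bar>mu\<bar>) * T"
    using H2a0_abs_le_norm2t[OF H, of 1] norm2t_le_tnorm[OF \<beta> \<gamma>, of z2 z z1]
    unfolding T_def distrib_right by (intro add_mono mult_left_mono) auto
  finally have "T \<le> \<bar>lam\<bar> + \<bar>mu\<bar>"
    using T0 by (cases "T = 0") (auto intro: mult_right_le_imp_le)
  then show ?thesis using T0 unfolding T_def[symmetric] by (intro power_mono)
qed

lemma boundary_system_solvable:
  fixes \<beta> \<gamma> lam mu :: real
  assumes "\<beta> \<ge> 0" "\<gamma> \<ge> 0"
  obtains A B where "\<beta> * (A + B) - 6 * B = lam" "2 * A + 6 * B + \<gamma> * (2 * A + 3 * B) = mu"
proof -
  define D where "D = 4 * \<beta> + \<beta> * \<gamma> + 12 + 12 * \<gamma>"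
  have "\<beta> * \<gamma> \<ge> 0" using assms by simp
  then have D: "D > 0" using assms unfolding D_def by linarith
  define A where "A = (lam * (6 + 3 * \<gamma>) - (\<beta> - 6) * mu) / D"
  define B where "B = (\<beta> * mu - (2 + 2 * \<gamma>) * lam) / D"
  have "\<beta> * (A + B) - 6 * B =
      (\<beta> * (lam * (6 + 3 * \<gamma>) - (\<beta> - 6) * mu) + (\<beta> - 6) * (\<beta> * mu - (2 + 2 * \<gamma>) * lam)) / D"
    unfolding A_def B_def using D by (simp add: field_simps)
  also have "\<dots> = lam * D / D" unfolding D_def by (simp add: algebra_simps)
  moreover have "2 * A + 6 * B + \<gamma> * (2 * A + 3 * B) = ((2 + 2 * \<gamma>) * (lam * (6 + 3 * \<gamma>) - (\<beta> - 6) * mu)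
      + (6 + 3 * \<gamma>) * (\<beta> * mu - (2 + 2 * \<gamma>) * lam)) / D"
    unfolding A_def B_def using D by (simp add: field_simps)
  moreover have "\<dots> = mu * D / D" unfolding D_def by (simp add: algebra_simps)
  ultimately show ?thesis using that D by simp
qed

lemma cubic_variational_identity:
  fixes A B \<beta> \<gamma> lam mu :: real
  assumes e1: "\<beta> * (A + B) - 6 * B = lam" and e2: "2 * A + 6 * B + \<gamma> * (2 * A + 3 * B) = mu"
    and H: "H2a0 a \<phi> \<phi>1 \<phi>2"
  shows "(LINT x:{0<..<1}|lborel. (2 * A + 6 * B * x) * \<phi>2 x) + \<beta> * (A + B) * \<phi> 1
      + \<gamma> * (2 * A + 3 * B) * \<phi>1 1 = lam * \<phi> 1 + mu * \<phi>1 1"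
proof -
  have H1: "H1 \<phi> \<phi>1" and H2: "H1 \<phi>1 \<phi>2" and z0: "\<phi> 0 = 0" and z10: "\<phi>1 0 = 0"
    using H unfolding H2a0_def H1a0_def by auto
  have L: "L2 \<phi>2" using H2 unfolding H1_def by auto
  have wa: "\<phi>2 absolutely_integrable_on {0..1}" by (rule L2_henstock(1)[OF L])
  have wi: "\<phi>2 integrable_on {0..1}" using wa unfolding absolutely_integrable_on_def by auto
  have "(\<lambda>x. x * \<phi>2 x) absolutely_integrable_on {0..1}"
    by (rule absolutely_integrable_bounded_measurable_product_real
        [OF continuous_imp_measurable_on_sets_lebesgue _ _ wa])
       (auto intro!: continuous_intros simp: bounded_iff intro!: exI[of _ 1])
  then have xw: "(\<lambda>x. x * \<phi>2 x) integrable_on {0..1}" unfolding absolutely_integrable_on_def by auto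
  have si: "set_integrable lborel {0<..<1} (\<lambda>x. \<phi>2 x * (2 * A + 6 * B * x))"
    by (rule set_integrable_Ioo_mult_continuous[OF L2_set_integrable[OF L]]) (intro continuous_intros)
  have "(LINT x:{0<..<1}|lborel. (2 * A + 6 * B * x) * \<phi>2 x) =
      integral {0..1} (\<lambda>x. \<phi>2 x * (2 * A + 6 * B * x))"
    using set_integral_Ioo_henstock(1)[OF si] by (simp add: mult.commute)
  also have "\<dots> = integral {0..1} (\<lambda>x. 2 * A * \<phi>2 x + 6 * B * (x * \<phi>2 x))"
    by (rule integral_cong) (simp add: algebra_simps)
  also have "\<dots> = 2 * A * integral {0..1} \<phi>2 + 6 * B * integral {0..1} (\<lambda>x. x * \<phi>2 x)"
    by (intro integral_unique has_integral_add has_integral_mult_right integrable_integral wi xw)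
  also have "\<dots> = 2 * A * \<phi>1 1 + 6 * B * (\<phi>1 1 - \<phi> 1)"
    using H1_FTC[OF H2, of 1] H1_integral_times_ident[OF H2] H1_FTC[OF H1, of 1] z0 z10 by simp
  moreover have "2 * A * \<phi>1 1 + 6 * B * (\<phi>1 1 - \<phi> 1) + \<beta> * (A + B) * \<phi> 1 + \<gamma> * (2 * A + 3 * B) * \<phi>1 1
      = (\<beta> * (A + B) - 6 * B) * \<phi> 1 + (2 * A + 6 * B + \<gamma> * (2 * A + 3 * B)) * \<phi>1 1"
    by (simp add: algebra_simps)
  ultimately show ?thesis using e1 e2 by simp
qed

lemma cubic_weak_deriv4:
  fixes A B :: real
  assumes \<phi>: "test_fun \<phi>"
  shows "(LINT x:{0<..<1}|lborel. (A * x\<^sup>2 + B * x ^ 3) * (deriv ^^ 4) \<phi> x) = 0"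
proof -
  have \<phi>k: "test_fun ((deriv ^^ k) \<phi>)" for k by (rule test_fun_funpow_deriv[OF \<phi>])
  have parts: "(LINT x:{0<..<1}|lborel. u x * (deriv ^^ j) \<phi> x) =
      - (LINT x:{0<..<1}|lborel. u' x * (deriv ^^ k) \<phi> x)"
    if "j = Suc k" "\<And>x. (u has_real_derivative u' x) (at x)" "continuous_on UNIV u'" for u u' j k
    using test_fun_integration_by_parts[OF that(2,3) \<phi>k[of k]] that(1) by simp
  have "(LINT x:{0<..<1}|lborel. (A * x\<^sup>2 + B * x ^ 3) * (deriv ^^ 4) \<phi> x) =
      - (LINT x:{0<..<1}|lborel. (2 * A * x + 3 * B * x\<^sup>2) * (deriv ^^ 3) \<phi> x)"
    by (rule parts) (auto intro!: derivative_eq_intros continuous_intros simp: power2_eq_square)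
  moreover have "(LINT x:{0<..<1}|lborel. (2 * A * x + 3 * B * x\<^sup>2) * (deriv ^^ 3) \<phi> x) =
      - (LINT x:{0<..<1}|lborel. (2 * A + 6 * B * x) * (deriv ^^ 2) \<phi> x)"
    by (rule parts) (auto intro!: derivative_eq_intros continuous_intros simp: power2_eq_square)
  moreover have "(LINT x:{0<..<1}|lborel. (2 * A + 6 * B * x) * (deriv ^^ 2) \<phi> x) =
      - (LINT x:{0<..<1}|lborel. 6 * B * (deriv ^^ 1) \<phi> x)"
    by (rule parts) (auto intro!: derivative_eq_intros continuous_intros)
  moreover have "(LINT x:{0<..<1}|lborel. 6 * B * (deriv ^^ 1) \<phi> x) =
      - (LINT x:{0<..<1}|lborel. 0 * (deriv ^^ 0) \<phi> x)"
    by (rule parts) (auto intro!: derivative_eq_intros continuous_intros)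
  ultimately show ?thesis by simp
qed

context hardy_weight
begin

lemma cubic_H2a0:
  "H2a0 a (\<lambda>x. A * x\<^sup>2 + B * x ^ 3) (\<lambda>x. 2 * A * x + 3 * B * x\<^sup>2) (\<lambda>x. 2 * A + 6 * B * x)"
proof -
  have "H1 (\<lambda>x. A * x\<^sup>2 + B * x ^ 3) (\<lambda>x. 2 * A * x + 3 * B * x\<^sup>2)"
    "H1 (\<lambda>x. 2 * A * x + 3 * B * x\<^sup>2) (\<lambda>x. 2 * A + 6 * B * x)"
    by (auto intro!: C1_H1 derivative_eq_intros continuous_intros simp: power2_eq_square)
  moreover have "\<bar>A * x\<^sup>2 + B * x ^ 3\<bar> \<le> (\<bar>A\<bar> + \<bar>B\<bar>) * x" if "x \<in> {0<..<1}" for x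
  proof -
    have "x ^ 3 \<le> x" "x\<^sup>2 \<le> x"
      using power_decreasing[of 1 3 x] power_decreasing[of 1 2 x] that by auto
    then have "\<bar>A\<bar> * x\<^sup>2 + \<bar>B\<bar> * x ^ 3 \<le> (\<bar>A\<bar> + \<bar>B\<bar>) * x"
      by (simp add: distrib_right add_mono mult_left_mono)
    then show ?thesis
      using abs_triangle_ineq[of "A * x\<^sup>2" "B * x ^ 3"] that by (simp add: abs_mult)
  qed
  then have "L2a a (\<lambda>x. A * x\<^sup>2 + B * x ^ 3)"
    by (intro L2a_if_linear_bound continuous_intros)
  ultimately show ?thesis unfolding H2a0_def H1a0_def by simp
qed

lemma cubic_var_sol:
  assumes "\<beta> * (A + B) - 6 * B = lam" "2 * A + 6 * B + \<gamma> * (2 * A + 3 * B) = mu"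
  shows "var_sol a \<beta> \<gamma> lam mu
    (\<lambda>x. A * x\<^sup>2 + B * x ^ 3) (\<lambda>x. 2 * A * x + 3 * B * x\<^sup>2) (\<lambda>x. 2 * A + 6 * B * x)"
  using cubic_H2a0 cubic_variational_identity[OF assms] unfolding var_sol_def by simp

lemma cubic_DA:
  "DA a (\<lambda>x. A * x\<^sup>2 + B * x ^ 3) (\<lambda>x. 2 * A * x + 3 * B * x\<^sup>2) (\<lambda>x. 2 * A + 6 * B * x) (\<lambda>x. 0)"
  using cubic_H2a0 cubic_weak_deriv4
  unfolding DA_def loc_int_def L2a_def L2_def set_integrable_def set_borel_measurable_def by simp

lemma var_sol_weighted_bound:
  assumes sol: "var_sol a \<beta> \<gamma> lam mu z z1 z2" and \<beta>: "\<beta> \<ge> 0" and \<gamma>: "\<gamma> \<ge> 0"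
  shows "(LINT x:{0<..<1}|lborel. (z x)\<^sup>2 / a x) \<le> (4 * C_HP a + 1) * (\<bar>lam\<bar> + \<bar>mu\<bar>)\<^sup>2"
proof -
  have H: "H2a0 a z z1 z2" using sol unfolding var_sol_def by blast
  then have H1: "H1a0 a z z1" "H1 z1 z2" "z1 0 = 0" unfolding H2a0_def by auto
  have "(LINT x:{0<..<1}|lborel. (z x)\<^sup>2 / a x) \<le> C_HP a * (LINT x:{0<..<1}|lborel. (z1 x)\<^sup>2)"
    by (rule C_HP_le[OF H1(1)])
  also have "\<dots> \<le> C_HP a * (LINT x:{0<..<1}|lborel. (z2 x)\<^sup>2)"
    using H1_integral_square_le[OF H1(2,3)] C_HP_nonneg by (rule mult_left_mono)
  also have "\<dots> \<le> C_HP a * (tnorm \<beta> \<gamma> z z1 z2)\<^sup>2"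
    using tnorm_sq[OF \<beta> \<gamma>] \<beta> \<gamma> C_HP_nonneg by (intro mult_left_mono) auto
  also have "\<dots> \<le> C_HP a * (\<bar>lam\<bar> + \<bar>mu\<bar>)\<^sup>2"
    using var_sol_tnorm_bound[OF sol \<beta> \<gamma>] C_HP_nonneg by (rule mult_left_mono)
  also have "\<dots> \<le> (4 * C_HP a + 1) * (\<bar>lam\<bar> + \<bar>mu\<bar>)\<^sup>2"
    using C_HP_nonneg by (intro mult_right_mono) auto
  finally show ?thesis .
qed

lemma var_sol_unique:
  assumes z: "var_sol a \<beta> \<gamma> lam mu z z1 z2" and y: "var_sol a \<beta> \<gamma> lam mu y y1 y2"
    and \<beta>: "\<beta> \<ge> 0" and \<gamma>: "\<gamma> \<ge> 0"
  shows "\<forall>x\<in>{0..1}. z x = y x"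
proof -
  have Hz: "H2a0 a z z1 z2" and Hy: "H2a0 a y y1 y2" using z y unfolding var_sol_def by auto
  define d d1 d2 where "d x = z x - y x" and "d1 x = z1 x - y1 x" and "d2 x = z2 x - y2 x" for x
  have Hd: "H2a0 a d d1 d2" unfolding d_def d1_def d2_def by (rule H2a0_diff[OF Hz Hy])
  have L: "L2 z2" "L2 y2" "L2 d2" using Hz Hy Hd unfolding H2a0_def H1_def by auto
  have "(LINT x:{0<..<1}|lborel. z2 x * d2 x) + \<beta> * z 1 * d 1 + \<gamma> * z1 1 * d1 1 = lam * d 1 + mu * d1 1"
    "(LINT x:{0<..<1}|lborel. y2 x * d2 x) + \<beta> * y 1 * d 1 + \<gamma> * y1 1 * d1 1 = lam * d 1 + mu * d1 1"
    using z y Hd unfolding var_sol_def by blast+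
  moreover have "(LINT x:{0<..<1}|lborel. z2 x * d2 x) - (LINT x:{0<..<1}|lborel. y2 x * d2 x)
      = (LINT x:{0<..<1}|lborel. (d2 x)\<^sup>2)"
    unfolding set_integral_diff(2)[OF L2_mult[OF L(1,3)] L2_mult[OF L(2,3)], symmetric]
    by (simp add: d2_def power2_eq_square left_diff_distrib)
  ultimately have "(LINT x:{0<..<1}|lborel. (d2 x)\<^sup>2) + \<beta> * (d 1)\<^sup>2 + \<gamma> * (d1 1)\<^sup>2 = 0"
    unfolding d_def d1_def by (simp add: power2_eq_square algebra_simps)
  moreover have "\<beta> * (d 1)\<^sup>2 \<ge> 0" "\<gamma> * (d1 1)\<^sup>2 \<ge> 0" using \<beta> \<gamma> by simp_all
  ultimately have "(LINT x:{0<..<1}|lborel. (d2 x)\<^sup>2) = 0"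
    using set_integral_square_nonneg[of d2] by linarith
  then have "\<forall>x\<in>{0..1}. d x = 0"
    by (intro H2a0_eq_0_if_norm2t_eq_0[OF Hd]) (simp add: norm2t_def)
  then show ?thesis unfolding d_def by simp
qed

lemma var_sol_exists:
  assumes \<beta>: "\<beta> \<ge> 0" and \<gamma>: "\<gamma> \<ge> 0"
  shows "\<exists>z z1 z2. var_sol a \<beta> \<gamma> lam mu z z1 z2
       \<and> (LINT x:{0<..<1}|lborel. (z x)\<^sup>2 / a x) \<le> (4 * C_HP a + 1) * (\<bar>lam\<bar> + \<bar>mu\<bar>)\<^sup>2
       \<and> (tnorm \<beta> \<gamma> z z1 z2)\<^sup>2 \<le> (\<bar>lam\<bar> + \<bar>mu\<bar>)\<^sup>2
       \<and> (\<exists>w. DA a z z1 z2 w \<and> (AE x in lborel. x \<in> {0<..<1} \<longrightarrow> a x * w x = 0))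
       \<and> (\<exists>z2' z3. (AE x in lborel. x \<in> {0<..<1} \<longrightarrow> z2' x = z2 x)
            \<and> continuous_on {0<..1} z2' \<and> continuous_on {0<..1} z3
            \<and> weak_deriv z2' z3
            \<and> \<beta> * z 1 - z3 1 = lam \<and> \<gamma> * z1 1 + z2' 1 = mu)"
proof -
  obtain A B where sys: "\<beta> * (A + B) - 6 * B = lam" "2 * A + 6 * B + \<gamma> * (2 * A + 3 * B) = mu"
    using boundary_system_solvable[OF \<beta> \<gamma>] by blast
  define z z1 z2 where "z = (\<lambda>x::real. A * x\<^sup>2 + B * x ^ 3)"
    and "z1 = (\<lambda>x::real. 2 * A * x + 3 * B * x\<^sup>2)" and "z2 = (\<lambda>x::real. 2 * A + 6 * B * x)"
  have sol: "var_sol a \<beta> \<gamma> lam mu z z1 z2"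
    unfolding z_def z1_def z2_def by (rule cubic_var_sol[OF sys])
  have "DA a z z1 z2 (\<lambda>x. 0)" unfolding z_def z1_def z2_def by (rule cubic_DA)
  then have DA: "\<exists>w. DA a z z1 z2 w \<and> (AE x in lborel. x \<in> {0<..<1} \<longrightarrow> a x * w x = 0)"
    by (intro exI[of _ "\<lambda>x. 0"]) simp
  have "continuous_on {0<..1} z2" "weak_deriv z2 (\<lambda>x. 6 * B)"
    "\<beta> * z 1 - 6 * B = lam" "\<gamma> * z1 1 + z2 1 = mu"
    using sys unfolding z_def z1_def z2_def
    by (auto intro!: continuous_intros C1_weak_deriv derivative_eq_intros simp: algebra_simps)
  then have boundary: "\<exists>z2' z3. (AE x in lborel. x \<in> {0<..<1} \<longrightarrow> z2' x = z2 x)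
      \<and> continuous_on {0<..1} z2' \<and> continuous_on {0<..1} z3 \<and> weak_deriv z2' z3
      \<and> \<beta> * z 1 - z3 1 = lam \<and> \<gamma> * z1 1 + z2' 1 = mu"
    by (intro exI[of _ z2] exI[of _ "\<lambda>x. 6 * B"]) (simp add: continuous_on_const)
  show ?thesis
    by (intro exI[of _ z] exI[of _ z1] exI[of _ z2] conjI sol DA boundary
        var_sol_weighted_bound[OF sol \<beta> \<gamma>] var_sol_tnorm_bound[OF sol \<beta> \<gamma>])
qed

end

theorem proposition2p2:
  fixes a :: "real \<Rightarrow> real" and \<beta> \<gamma> :: real
  assumes "WD a \<or> SD a" and "\<beta> \<ge> 0" and "\<gamma> \<ge> 0"
  shows "(\<forall>z z1 z2. H2a0 a z z1 z2 \<longrightarrow>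
            (norm2t z2 = 0 \<longrightarrow> (\<forall>x\<in>{0..1}. z x = 0)) \<and>
            (tnorm \<beta> \<gamma> z z1 z2 = 0 \<longrightarrow> (\<forall>x\<in>{0..1}. z x = 0)))
       \<and> (\<exists>c C. 0 < c \<and> 0 < C \<and> (\<forall>z z1 z2. H2a0 a z z1 z2 \<longrightarrow>
            c * norm2t z2 \<le> tnorm \<beta> \<gamma> z z1 z2 \<and> tnorm \<beta> \<gamma> z z1 z2 \<le> C * norm2t z2))
       \<and> (\<forall>lam mu :: real.
            (\<exists>z z1 z2. var_sol a \<beta> \<gamma> lam mu z z1 z2
               \<and> (LINT x:{0<..<1}|lborel. (z x)\<^sup>2 / a x) \<le> (4 * C_HP a + 1) * (\<bar>lam\<bar> + \<bar>mu\<bar>)\<^sup>2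
               \<and> (tnorm \<beta> \<gamma> z z1 z2)\<^sup>2 \<le> (\<bar>lam\<bar> + \<bar>mu\<bar>)\<^sup>2
               \<and> (\<exists>w. DA a z z1 z2 w \<and> (AE x in lborel. x \<in> {0<..<1} \<longrightarrow> a x * w x = 0))
               \<and> (\<exists>z2' z3. (AE x in lborel. x \<in> {0<..<1} \<longrightarrow> z2' x = z2 x)
                    \<and> continuous_on {0<..1} z2' \<and> continuous_on {0<..1} z3
                    \<and> weak_deriv z2' z3
                    \<and> \<beta> * z 1 - z3 1 = lam \<and> \<gamma> * z1 1 + z2' 1 = mu))
          \<and> (\<forall>z z1 z2 y y1 y2. var_sol a \<beta> \<gamma> lam mu z z1 z2 \<and> var_sol a \<beta> \<gamma> lam mu y y1 y2
               \<longrightarrow> (\<forall>x\<in>{0..1}. z x = y x)))"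
proof -
  obtain a' K where "hardy_weight a a' K" using hardy_weight_if_WD_or_SD[OF assms(1)] .
  then interpret hardy_weight a a' K .
  have tnorm_eq_0: "norm2t z2 = 0" if "tnorm \<beta> \<gamma> z z1 z2 = 0" for z z1 z2 :: "real \<Rightarrow> real"
    using norm2t_le_tnorm[OF assms(2,3), of z2 z z1] norm2t_nonneg[of z2] that by linarith
  show ?thesis
  proof (intro conjI allI impI)
    show "\<forall>x\<in>{0..1}. z x = 0" if "H2a0 a z z1 z2" "norm2t z2 = 0" for z z1 z2
      using H2a0_eq_0_if_norm2t_eq_0 that .
    show "\<forall>x\<in>{0..1}. z x = 0" if "H2a0 a z z1 z2" "tnorm \<beta> \<gamma> z z1 z2 = 0" for z z1 z2
      using H2a0_eq_0_if_norm2t_eq_0 tnorm_eq_0 that by blast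
    show "\<forall>x\<in>{0..1}. z x = y x"
      if "var_sol a \<beta> \<gamma> lam mu z z1 z2 \<and> var_sol a \<beta> \<gamma> lam mu y y1 y2" for lam mu z z1 z2 y y1 y2
      using var_sol_unique[OF _ _ assms(2,3)] that by blast
  qed (fact norms_equivalent[OF assms(2,3)] var_sol_exists[OF assms(2,3)])+
qed

end
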